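(* Let $A\subseteq\mathcal{R}$ be S-measurable. Then $A$ is L-measurable and $M(A)=M_s(A)$.
   Context: $\mathcal{R}$ denotes the Levi-Civita field: functions $x:\mathbb{Q}\to\mathbb{R}$ with left-finite support, with componentwise addition and formal power series multiplication, ordered by $x>0$ iff $x\ne0$ and $x[\min\operatorname{supp}x]>0$; it is a non-Archimedean ordered field extension of $\mathbb{R}$, Cauchy complete in the order topology, in which all limits and series are taken (a series $\sum a_n$ converges iff $a_n\to0$). An interval is a set $[a,b],[a,b),(a,b]$ or $(a,b)$ with $a<b$ in $\mathcal{R}$, of length $l=b-a$. A cover of $A\subseteq\mathcal{R}$ is a sequence of intervals $(S_n)_{n\ge1}$ with $A\subseteq\bigcup_n S_n$ and $\sum_n l(S_n)$ convergent in $\mathcal{R}$. $A$ is called outer measurable if the infimum $\inf\{\sum_n l(S_n): (S_n)\text{ a cover of }A\}$ exists in $\mathcal{R}$; this infimum is then called the outer measure $M_u(A)$. An outer measurable set $A\subseteq\mathcal{R}$ is L-measurable if for every outer measurable $B\subseteq\mathcal{R}$ both $A\cap B$ and $A^c\cap B$ (where $A^c=\mathcal{R}\setminus A$) are outer measurable and $M_u(B)=M_u(A\cap B)+M_u(A^c\cap B)$; then its L-measure is $M(A):=M_u(A)$. A set $A\subseteq\mathcal{R}$ is S-measurable if for every $\epsilon>0$ in $\mathcal{R}$ there are sequences of pairwise disjoint intervals $(I_n)$, $(J_n)$ with $\bigcup_n I_n\subseteq A\subseteq\bigcup_n J_n$, $\sum_n l(I_n)$ and $\sum_n l(J_n)$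 convergent, and $\sum_n l(J_n)-\sum_n l(I_n)\le\epsilon$; its S-measure $M_s(A)$ is the supremum of $\sum_n l(I_n)$ over such inner families, which equals the infimum of $\sum_n l(J_n)$ over such outer families. *)

theory Defs
  imports Complex_Main
begin

typedef levi_civita = "{x :: rat \<Rightarrow> real. \<forall>q. finite {p. p \<le> q \<and> x p \<noteq> 0}}"
  morphisms lc_rep Abs_lc
  by (rule exI[of _ "\<lambda>_. 0"]) simp

instantiation levi_civita :: "{zero, plus, minus, uminus, times, ord}"
begin

definition zero_levi_civita :: levi_civita where
  "zero_levi_civita = Abs_lc (\<lambda>_. 0)"

definition plus_levi_civita :: "levi_civita \<Rightarrow> levi_civita \<Rightarrow> levi_civita" where
  "plus_levi_civita x y = Abs_lc (\<lambda>q. lc_rep x q + lc_rep y q)"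

definition uminus_levi_civita :: "levi_civita \<Rightarrow> levi_civita" where
  "uminus_levi_civita x = Abs_lc (\<lambda>q. - lc_rep x q)"

definition minus_levi_civita :: "levi_civita \<Rightarrow> levi_civita \<Rightarrow> levi_civita" where
  "minus_levi_civita x y = Abs_lc (\<lambda>q. lc_rep x q - lc_rep y q)"

text \<open>Formal power series (Cauchy) product; the index set is finite by left-finiteness.\<close>
definition times_levi_civita :: "levi_civita \<Rightarrow> levi_civita \<Rightarrow> levi_civita" where
  "times_levi_civita x y = Abs_lc (\<lambda>q.
     \<Sum>p\<in>{p. lc_rep x p \<noteq> 0 \<and> lc_rep y (q - p) \<noteq> 0}. lc_rep x p * lc_rep y (q - p))"

definition lc_pos :: "levi_civita \<Rightarrow> bool" where
  "lc_pos x \<longleftrightarrow> (\<exists>q. lc_rep x q > 0 \<and> (\<forall>p<q. lc_rep x p = 0))"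

definition less_levi_civita :: "levi_civita \<Rightarrow> levi_civita \<Rightarrow> bool" where
  "less_levi_civita x y \<longleftrightarrow> lc_pos (y - x)"

definition less_eq_levi_civita :: "levi_civita \<Rightarrow> levi_civita \<Rightarrow> bool" where
  "less_eq_levi_civita x y \<longleftrightarrow> x = y \<or> lc_pos (y - x)"

instance ..
end

definition lc_abs :: "levi_civita \<Rightarrow> levi_civita" where
  "lc_abs x = (if 0 \<le> x then x else - x)"

definition lc_tendsto :: "(nat \<Rightarrow> levi_civita) \<Rightarrow> levi_civita \<Rightarrow> bool" where
  "lc_tendsto f L \<longleftrightarrow> (\<forall>e>0. \<exists>N. \<forall>n\<ge>N. lc_abs (f n - L) < e)"

primrec lc_psum :: "(nat \<Rightarrow> levi_civita) \<Rightarrow> nat \<Rightarrow> levi_civita" where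
  "lc_psum f 0 = 0"
| "lc_psum f (Suc n) = lc_psum f n + f n"

definition lc_sums :: "(nat \<Rightarrow> levi_civita) \<Rightarrow> levi_civita \<Rightarrow> bool" where
  "lc_sums f s \<longleftrightarrow> lc_tendsto (lc_psum f) s"

definition lc_summable :: "(nat \<Rightarrow> levi_civita) \<Rightarrow> bool" where
  "lc_summable f \<longleftrightarrow> (\<exists>s. lc_sums f s)"

definition lc_suminf :: "(nat \<Rightarrow> levi_civita) \<Rightarrow> levi_civita" where
  "lc_suminf f = (THE s. lc_sums f s)"

definition is_inf :: "levi_civita set \<Rightarrow> levi_civita \<Rightarrow> bool" where
  "is_inf T m \<longleftrightarrow> (\<forall>t\<in>T. m \<le> t) \<and> (\<forall>m'. (\<forall>t\<in>T. m' \<le> t) \<longrightarrow> m' \<le> m)"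

definition is_sup :: "levi_civita set \<Rightarrow> levi_civita \<Rightarrow> bool" where
  "is_sup T m \<longleftrightarrow> (\<forall>t\<in>T. t \<le> m) \<and> (\<forall>m'. (\<forall>t\<in>T. t \<le> m') \<longrightarrow> m \<le> m')"

text \<open>An interval is given by (a, b, left closed?, right closed?) with a < b.\<close>
type_synonym lc_ivl = "levi_civita \<times> levi_civita \<times> bool \<times> bool"

fun is_ivl :: "lc_ivl \<Rightarrow> bool" where
  "is_ivl (a, b, lc, rc) \<longleftrightarrow> a < b"

fun ivl_set :: "lc_ivl \<Rightarrow> levi_civita set" where
  "ivl_set (a, b, lc, rc) =
     {x. (if lc then a \<le> x else a < x) \<and> (if rc then x \<le> b else x < b)}"

fun ivl_len :: "lc_ivl \<Rightarrow> levi_civita" where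
  "ivl_len (a, b, lc, rc) = b - a"

definition is_cover :: "(nat \<Rightarrow> lc_ivl) \<Rightarrow> levi_civita set \<Rightarrow> bool" where
  "is_cover S A \<longleftrightarrow> (\<forall>n. is_ivl (S n)) \<and> A \<subseteq> (\<Union>n. ivl_set (S n))
      \<and> lc_summable (\<lambda>n. ivl_len (S n))"

definition cover_sums :: "levi_civita set \<Rightarrow> levi_civita set" where
  "cover_sums A = {lc_suminf (\<lambda>n. ivl_len (S n)) | S. is_cover S A}"

definition outer_measurable :: "levi_civita set \<Rightarrow> bool" where
  "outer_measurable A \<longleftrightarrow> (\<exists>m. is_inf (cover_sums A) m)"

definition Mu :: "levi_civita set \<Rightarrow> levi_civita" where
  "Mu A = (THE m. is_inf (cover_sums A) m)"

definition L_measurable :: "levi_civita set \<Rightarrow> bool" where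
  "L_measurable A \<longleftrightarrow> outer_measurable A \<and>
     (\<forall>B. outer_measurable B \<longrightarrow>
        outer_measurable (A \<inter> B) \<and> outer_measurable (- A \<inter> B) \<and>
        Mu B = Mu (A \<inter> B) + Mu (- A \<inter> B))"

definition L_measure :: "levi_civita set \<Rightarrow> levi_civita" where
  "L_measure A = Mu A"

text \<open>Countable (possibly finite or empty) families of intervals: None = no interval.\<close>
type_synonym lc_fam = "nat \<Rightarrow> lc_ivl option"

definition fam_piece :: "lc_fam \<Rightarrow> nat \<Rightarrow> levi_civita set" where
  "fam_piece F n = (case F n of None \<Rightarrow> {} | Some I \<Rightarrow> ivl_set I)"

definition fam_len :: "lc_fam \<Rightarrow> nat \<Rightarrow> levi_civita" where
  "fam_len F n = (case F n of None \<Rightarrow> 0 | Some I \<Rightarrow> ivl_len I)"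

definition disj_fam :: "lc_fam \<Rightarrow> bool" where
  "disj_fam F \<longleftrightarrow> (\<forall>n I. F n = Some I \<longrightarrow> is_ivl I) \<and>
     (\<forall>m n. m \<noteq> n \<longrightarrow> fam_piece F m \<inter> fam_piece F n = {})"

definition inner_fam :: "lc_fam \<Rightarrow> levi_civita set \<Rightarrow> bool" where
  "inner_fam F A \<longleftrightarrow> disj_fam F \<and> (\<Union>n. fam_piece F n) \<subseteq> A \<and> lc_summable (fam_len F)"

definition outer_fam :: "lc_fam \<Rightarrow> levi_civita set \<Rightarrow> bool" where
  "outer_fam F A \<longleftrightarrow> disj_fam F \<and> A \<subseteq> (\<Union>n. fam_piece F n) \<and> lc_summable (fam_len F)"

definition S_measurable :: "levi_civita set \<Rightarrow> bool" where
  "S_measurable A \<longleftrightarrow> (\<forall>e>0. \<exists>I J. inner_fam I A \<and> outer_fam J A \<and>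
      lc_suminf (fam_len J) - lc_suminf (fam_len I) \<le> e)"

definition Ms :: "levi_civita set \<Rightarrow> levi_civita" where
  "Ms A = (THE m. is_sup {lc_suminf (fam_len I) | I. inner_fam I A} m)"

end

theory Submission
  imports Defs "HOL-Analysis.Continuum_Not_Denumerable"
begin

text \<open>The proof rests on a splitting property of a set \<open>E\<close>: every summable sequence \<open>S\<close> of
  intervals can be replaced, at an arbitrarily small extra cost in total length, by two such
  sequences covering the parts of \<open>\<Union>S\<close> inside and outside \<open>E\<close>. The property yields
  Carath\'eodory's condition, holds for half-lines and is preserved by complements and finite
  intersections, hence holds for finite unions of intervals. An S-measurable set lies between the
  unions of the first few intervals of an inner and of an outer family, up to a tail of small total
  length, and this transfers the splitting property to it. Outer measures exist because the field
  is Cauchy complete, and \<open>M(A) = M\<^sub>s(A)\<close> because a cover of an interval has total length at least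
  the length of the interval; Heine-Borel fails in this non-Archimedean field, so this needs an
  uncountability argument instead of compactness.\<close>

definition left_finite :: "(rat \<Rightarrow> real) \<Rightarrow> bool" where
  "left_finite f \<longleftrightarrow> (\<forall>q. finite {p. p \<le> q \<and> f p \<noteq> 0})"

lemma left_finite_lc_rep [simp]: "left_finite (lc_rep x)"
  using lc_rep[of x] by (simp add: left_finite_def)

lemma lc_rep_Abs_lc [simp]: "left_finite f \<Longrightarrow> lc_rep (Abs_lc f) = f"
  by (rule Abs_lc_inverse) (simp add: left_finite_def)

lemma left_finite_subset:
  assumes "left_finite f" "\<And>p. g p \<noteq> 0 \<Longrightarrow> f p \<noteq> 0"
  shows "left_finite g"
proof -
  have "{p. p \<le> q \<and> g p \<noteq> 0} \<subseteq> {p. p \<le> q \<and> f p \<noteq> 0}" for q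
    using assms(2) by auto
  then show ?thesis
    using assms(1) unfolding left_finite_def by (meson finite_subset)
qed

lemma left_finite_add:
  assumes "left_finite f" "left_finite g"
  shows "left_finite (\<lambda>q. f q + g q)"
  unfolding left_finite_def
proof
  fix q
  have "{p. p \<le> q \<and> f p + g p \<noteq> 0} \<subseteq> {p. p \<le> q \<and> f p \<noteq> 0} \<union> {p. p \<le> q \<and> g p \<noteq> 0}"
    by auto
  then show "finite {p. p \<le> q \<and> f p + g p \<noteq> 0}"
    using assms unfolding left_finite_def by (meson finite_Un finite_subset)
qed

lemma left_finite_scale: "left_finite f \<Longrightarrow> left_finite (\<lambda>q. r * f q)"
  by (erule left_finite_subset) simp

lemma left_finite_diff: "left_finite f \<Longrightarrow> left_finite g \<Longrightarrow> left_finite (\<lambda>q. f q - g q)"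
  using left_finite_add[of f "\<lambda>q. (-1) * g q"] left_finite_scale[of g "-1"] by simp

lemma lc_rep_zero [simp]: "lc_rep 0 q = 0"
  by (simp add: zero_levi_civita_def left_finite_def)

lemma lc_rep_add [simp]: "lc_rep (x + y) q = lc_rep x q + lc_rep y q"
  by (simp add: plus_levi_civita_def left_finite_add)

lemma lc_rep_uminus [simp]: "lc_rep (- x) q = - lc_rep x q"
  using left_finite_scale[of "lc_rep x" "-1"] by (simp add: uminus_levi_civita_def)

lemma lc_rep_diff [simp]: "lc_rep (x - y) q = lc_rep x q - lc_rep y q"
  by (simp add: minus_levi_civita_def left_finite_diff)

lemma lc_eqI: "(\<And>q. lc_rep x q = lc_rep y q) \<Longrightarrow> x = y"
  by (metis ext lc_rep_inject)

lemma lc_leading_coeff: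
  assumes "x \<noteq> 0"
  obtains q where "lc_rep x q \<noteq> 0" "\<forall>p<q. lc_rep x p = 0"
proof -
  obtain q0 where q0: "lc_rep x q0 \<noteq> 0"
    using assms lc_eqI[of x 0] by auto
  let ?S = "{p. p \<le> q0 \<and> lc_rep x p \<noteq> 0}"
  have fin: "finite ?S"
    using left_finite_lc_rep[of x] by (simp add: left_finite_def)
  then have "Min ?S \<in> ?S"
    using q0 by (intro Min_in) auto
  moreover have "\<forall>p < Min ?S. lc_rep x p = 0"
  proof (intro allI impI, rule ccontr)
    fix p
    assume "p < Min ?S" "lc_rep x p \<noteq> 0"
    with \<open>Min ?S \<in> ?S\<close> have "p \<in> ?S"
      by auto
    then show False
      using Min_le[OF fin] \<open>p < Min ?S\<close> by fastforce
  qed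
  ultimately show ?thesis
    using that by blast
qed

lemma lc_pos_nonzero: "lc_pos x \<Longrightarrow> x \<noteq> 0"
  by (auto simp: lc_pos_def)

lemma lc_pos_total:
  assumes "x \<noteq> 0"
  shows "lc_pos x \<or> lc_pos (- x)"
proof -
  obtain q where q: "lc_rep x q \<noteq> 0" "\<forall>p<q. lc_rep x p = 0"
    using lc_leading_coeff[OF assms] .
  then show ?thesis
    unfolding lc_pos_def by (cases "lc_rep x q > 0") (auto intro!: exI[of _ q])
qed

lemma lc_pos_uminus:
  assumes "lc_pos x"
  shows "\<not> lc_pos (- x)"
proof
  assume "lc_pos (- x)"
  then obtain b where b: "lc_rep x b < 0" "\<forall>p<b. lc_rep x p = 0"
    by (auto simp: lc_pos_def)
  obtain a where a: "lc_rep x a > 0" "\<forall>p<a. lc_rep x p = 0"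
    using assms by (auto simp: lc_pos_def)
  from a b have "a = b"
    by (metis linorder_neqE order_less_irrefl)
  with a b show False
    by simp
qed

lemma lc_pos_add:
  assumes "lc_pos x" "lc_pos y"
  shows "lc_pos (x + y)"
proof -
  obtain a where a: "lc_rep x a > 0" "\<forall>p<a. lc_rep x p = 0"
    using assms(1) by (auto simp: lc_pos_def)
  obtain b where b: "lc_rep y b > 0" "\<forall>p<b. lc_rep y p = 0"
    using assms(2) by (auto simp: lc_pos_def)
  show ?thesis
    unfolding lc_pos_def
    using a b by (cases a b rule: linorder_cases) (auto intro!: exI[of _ "min a b"])
qed

lemma lc_uminus_diff: "- (b - a) = a - (b::levi_civita)"
  by (rule lc_eqI) simp

lemma lc_diff_eq_0_iff: "b - a = 0 \<longleftrightarrow> a = (b::levi_civita)"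
proof
  assume "b - a = 0"
  then show "a = b"
    by (intro lc_eqI) (metis lc_rep_diff lc_rep_zero right_minus_eq)
qed (auto intro: lc_eqI)

instance levi_civita :: linordered_ab_group_add
proof
  fix a b c :: levi_civita
  show "a + b + c = a + (b + c)" "a + b = b + a" "0 + a = a" "- a + a = 0" "a - b = a + - b"
    by (rule lc_eqI; simp)+
  show "a \<le> a"
    by (simp add: less_eq_levi_civita_def)
  show "a < b \<longleftrightarrow> a \<le> b \<and> \<not> b \<le> a"
  proof -
    have "lc_pos (b - a) \<Longrightarrow> \<not> lc_pos (a - b)"
      using lc_pos_uminus lc_uminus_diff by metis
    then show ?thesis
      unfolding less_eq_levi_civita_def less_levi_civita_def
      using lc_pos_nonzero lc_diff_eq_0_iff by blast
  qed
  show "a \<le> c" if "a \<le> b" "b \<le> c"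
  proof -
    have "(c - b) + (b - a) = c - a"
      by (rule lc_eqI) simp
    then show ?thesis
      using that lc_pos_add unfolding less_eq_levi_civita_def by metis
  qed
  show "a = b" if "a \<le> b" "b \<le> a"
    using that lc_pos_uminus lc_uminus_diff unfolding less_eq_levi_civita_def by metis
  show "a \<le> b \<or> b \<le> a"
    using lc_pos_total[of "b - a"] lc_diff_eq_0_iff lc_uminus_diff
    unfolding less_eq_levi_civita_def by metis
  show "c + a \<le> c + b" if "a \<le> b"
  proof -
    have "(c + b) - (c + a) = b - a"
      by (rule lc_eqI) simp
    then show ?thesis
      using that unfolding less_eq_levi_civita_def by auto
  qed
qed

lemma lc_pos_iff_less: "lc_pos x \<longleftrightarrow> 0 < x"
  unfolding less_levi_civita_def by simp

lemma lc_less_iff: "x < y \<longleftrightarrow> lc_pos (y - x)"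
  by (simp add: less_levi_civita_def)

section \<open>Orders of magnitude\<close>

text \<open>The sets \<open>{x. vanishes_upto Q x}\<close>, \<open>Q :: rat\<close>, form a neighbourhood base of \<open>0\<close>
  in the order topology; they replace \<open>\<epsilon>\<close>-balls in all limit arguments.\<close>

definition vanishes_upto :: "rat \<Rightarrow> levi_civita \<Rightarrow> bool" where
  "vanishes_upto Q x \<longleftrightarrow> (\<forall>p\<le>Q. lc_rep x p = 0)"

lemma vanishes_upto_0 [simp]: "vanishes_upto Q 0"
  by (simp add: vanishes_upto_def)

lemma vanishes_upto_add: "vanishes_upto Q x \<Longrightarrow> vanishes_upto Q y \<Longrightarrow> vanishes_upto Q (x + y)"
  by (simp add: vanishes_upto_def)

lemma vanishes_upto_diff: "vanishes_upto Q x \<Longrightarrow> vanishes_upto Q y \<Longrightarrow> vanishes_upto Q (x - y)"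
  by (simp add: vanishes_upto_def)

lemma vanishes_upto_uminus [simp]: "vanishes_upto Q (- x) \<longleftrightarrow> vanishes_upto Q x"
  by (simp add: vanishes_upto_def)

lemma vanishes_upto_commute: "vanishes_upto Q (x - y) \<longleftrightarrow> vanishes_upto Q (y - x)"
  using vanishes_upto_uminus[of Q "x - y"] by simp

lemma vanishes_upto_mono: "Q' \<le> Q \<Longrightarrow> vanishes_upto Q x \<Longrightarrow> vanishes_upto Q' x"
  by (simp add: vanishes_upto_def)

lemma lc_eq_0_if_vanishes: "(\<And>Q. vanishes_upto Q x) \<Longrightarrow> x = 0"
  by (rule lc_eqI) (simp add: vanishes_upto_def, blast)

lemma ex_not_vanishes_upto:
  assumes "x \<noteq> 0"
  obtains Q where "\<not> vanishes_upto Q x"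
  using assms lc_eq_0_if_vanishes by blast

lemma vanishes_upto_less:
  assumes "vanishes_upto Q x" "0 < y" "\<not> vanishes_upto Q y"
  shows "x < y"
proof -
  obtain q where q: "lc_rep y q > 0" "\<forall>p<q. lc_rep y p = 0"
    using assms(2) by (auto simp: lc_pos_iff_less[symmetric] lc_pos_def)
  obtain p where "p \<le> Q" "lc_rep y p \<noteq> 0"
    using assms(3) by (auto simp: vanishes_upto_def)
  with q have "q \<le> Q"
    by (meson not_less order_trans)
  with q assms(1) have "lc_pos (y - x)"
    unfolding lc_pos_def by (intro exI[of _ q]) (auto simp: vanishes_upto_def)
  then show ?thesis
    by (simp add: lc_less_iff)
qed

lemma vanishes_upto_le:
  assumes "0 \<le> x" "x \<le> y" "vanishes_upto Q y"
  shows "vanishes_upto Q x"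
proof (rule ccontr)
  assume "\<not> vanishes_upto Q x"
  moreover from this have "0 < x"
    using assms(1) by (cases "x = 0") auto
  ultimately have "y < x"
    using vanishes_upto_less[OF assms(3)] by blast
  then show False
    using assms(2) by simp
qed

lemma vanishes_upto_bounded:
  assumes "- y \<le> x" "x \<le> y" "vanishes_upto Q y"
  shows "vanishes_upto Q x"
proof (cases "0 \<le> x")
  case True
  then show ?thesis
    using vanishes_upto_le assms by blast
next
  case False
  then have "0 \<le> - x" "- x \<le> y"
    using assms(1) by (auto simp: minus_le_iff)
  then show ?thesis
    using vanishes_upto_le assms(3) vanishes_upto_uminus by blast
qed

lemma vanishes_upto_lc_abs [simp]: "vanishes_upto Q (lc_abs x) \<longleftrightarrow> vanishes_upto Q x"
  by (simp add: lc_abs_def)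

lemma lc_abs_nonneg: "0 \<le> lc_abs x"
  unfolding lc_abs_def by (cases "0 \<le> x") auto

definition lc_monom :: "real \<Rightarrow> rat \<Rightarrow> levi_civita" where
  "lc_monom c t = Abs_lc (\<lambda>q. if q = t then c else 0)"

lemma lc_rep_monom [simp]: "lc_rep (lc_monom c t) q = (if q = t then c else 0)"
proof -
  have "left_finite (\<lambda>q. if q = t then c else 0)"
    unfolding left_finite_def by (auto intro: finite_subset[of _ "{t}"])
  then show ?thesis
    by (simp add: lc_monom_def)
qed

lemma lc_monom_pos: "0 < c \<Longrightarrow> 0 < lc_monom c t"
  unfolding lc_pos_iff_less[symmetric] lc_pos_def by (intro exI[of _ t]) auto

lemma vanishes_upto_monom: "Q < t \<Longrightarrow> vanishes_upto Q (lc_monom c t)"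
  by (auto simp: vanishes_upto_def)

lemma lc_monom_diff: "lc_monom r t - lc_monom r' t = lc_monom (r - r') t"
  by (rule lc_eqI) simp

definition lc_half :: "levi_civita \<Rightarrow> levi_civita" where
  "lc_half x = Abs_lc (\<lambda>q. lc_rep x q / 2)"

lemma lc_rep_half [simp]: "lc_rep (lc_half x) q = lc_rep x q / 2"
  using left_finite_scale[of "lc_rep x" "1/2"] by (simp add: lc_half_def)

lemma lc_half_half: "lc_half x + lc_half x = x"
  by (rule lc_eqI) simp

lemma lc_half_pos: "0 < x \<Longrightarrow> 0 < lc_half x"
  unfolding lc_pos_iff_less[symmetric] lc_pos_def by auto

lemma lc_le_epsilon:
  assumes "\<And>e. 0 < e \<Longrightarrow> x \<le> y + e"
  shows "x \<le> (y::levi_civita)"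
proof (rule ccontr)
  assume "\<not> x \<le> y"
  then have "0 < x - y"
    by simp
  then have "x \<le> y + lc_half (x - y)" "0 < lc_half (x - y)"
    using assms lc_half_pos by blast+
  then have "x - y \<le> lc_half (x - y)"
    by (simp add: algebra_simps)
  moreover have "lc_half (x - y) < lc_half (x - y) + lc_half (x - y)"
    using \<open>0 < lc_half (x - y)\<close> by simp
  ultimately show False
    unfolding lc_half_half by simp
qed

lemma lc_tendsto_iff_vanishes: "lc_tendsto f L \<longleftrightarrow> (\<forall>Q. \<exists>N. \<forall>n\<ge>N. vanishes_upto Q (f n - L))"
proof
  assume lim: "lc_tendsto f L"
  show "\<forall>Q. \<exists>N. \<forall>n\<ge>N. vanishes_upto Q (f n - L)"
  proof
    fix Q
    obtain N where N: "\<forall>n\<ge>N. lc_abs (f n - L) < lc_monom 1 (Q + 1)"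
      using lim lc_monom_pos[of 1 "Q + 1"] unfolding lc_tendsto_def by auto
    have "vanishes_upto Q (lc_abs (f n - L))" if "n \<ge> N" for n
    proof (rule vanishes_upto_le[OF lc_abs_nonneg])
      show "lc_abs (f n - L) \<le> lc_monom 1 (Q + 1)"
        using N that by (simp add: less_imp_le)
      show "vanishes_upto Q (lc_monom 1 (Q + 1))"
        by (rule vanishes_upto_monom) simp
    qed
    then show "\<exists>N. \<forall>n\<ge>N. vanishes_upto Q (f n - L)"
      by auto
  qed
next
  assume van: "\<forall>Q. \<exists>N. \<forall>n\<ge>N. vanishes_upto Q (f n - L)"
  show "lc_tendsto f L"
    unfolding lc_tendsto_def
  proof (intro allI impI)
    fix e :: levi_civita
    assume e: "0 < e"
    then obtain Q where Q: "\<not> vanishes_upto Q e"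
      using ex_not_vanishes_upto by (metis less_irrefl)
    obtain N where "\<forall>n\<ge>N. vanishes_upto Q (f n - L)"
      using van by blast
    then have "\<forall>n\<ge>N. lc_abs (f n - L) < e"
      using vanishes_upto_less[OF _ e Q] by simp
    then show "\<exists>N. \<forall>n\<ge>N. lc_abs (f n - L) < e"
      by blast
  qed
qed

lemma lc_tendsto_unique:
  assumes "lc_tendsto f L" "lc_tendsto f M"
  shows "L = M"
proof -
  have "vanishes_upto Q (L - M)" for Q
  proof -
    obtain N1 where "\<forall>n\<ge>N1. vanishes_upto Q (f n - L)"
      using assms(1) by (auto simp: lc_tendsto_iff_vanishes)
    moreover obtain N2 where "\<forall>n\<ge>N2. vanishes_upto Q (f n - M)"
      using assms(2) by (auto simp: lc_tendsto_iff_vanishes)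
    ultimately have "vanishes_upto Q ((f (max N1 N2) - M) - (f (max N1 N2) - L))"
      by (metis vanishes_upto_diff max.cobounded1 max.cobounded2)
    then show ?thesis
      by simp
  qed
  then show ?thesis
    using lc_eq_0_if_vanishes[of "L - M"] by simp
qed

lemma lc_tendsto_add:
  assumes "lc_tendsto f L" "lc_tendsto g M"
  shows "lc_tendsto (\<lambda>n. f n + g n) (L + M)"
  unfolding lc_tendsto_iff_vanishes
proof
  fix Q
  obtain N1 where N1: "\<forall>n\<ge>N1. vanishes_upto Q (f n - L)"
    using assms(1) by (auto simp: lc_tendsto_iff_vanishes)
  obtain N2 where N2: "\<forall>n\<ge>N2. vanishes_upto Q (g n - M)"
    using assms(2) by (auto simp: lc_tendsto_iff_vanishes)
  have "vanishes_upto Q ((f n + g n) - (L + M))" if "n \<ge> max N1 N2" for n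
    using vanishes_upto_add[of Q "f n - L" "g n - M"] N1 N2 that by (simp add: algebra_simps)
  then show "\<exists>N. \<forall>n\<ge>N. vanishes_upto Q (f n + g n - (L + M))"
    by blast
qed

lemma lc_tendsto_uminus: "lc_tendsto f L \<Longrightarrow> lc_tendsto (\<lambda>n. - f n) (- L)"
  by (simp add: lc_tendsto_iff_vanishes vanishes_upto_commute)

lemma lc_tendsto_const: "lc_tendsto (\<lambda>n. c) c"
  by (simp add: lc_tendsto_iff_vanishes)

lemma lc_tendsto_diff:
  "lc_tendsto f L \<Longrightarrow> lc_tendsto g M \<Longrightarrow> lc_tendsto (\<lambda>n. f n - g n) (L - M)"
  using lc_tendsto_add[OF _ lc_tendsto_uminus, of f L g M] by simp

lemma lc_tendsto_lower_bound:
  assumes "lc_tendsto f L" "\<forall>n\<ge>N. c \<le> f n"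
  shows "c \<le> L"
proof (rule ccontr)
  assume "\<not> c \<le> L"
  then have pos: "0 < c - L"
    by simp
  then obtain Q where Q: "\<not> vanishes_upto Q (c - L)"
    using ex_not_vanishes_upto by (metis less_irrefl)
  obtain N1 where "\<forall>n\<ge>N1. vanishes_upto Q (f n - L)"
    using assms(1) by (auto simp: lc_tendsto_iff_vanishes)
  then have "f (max N N1) - L < c - L"
    using vanishes_upto_less[OF _ pos Q] by simp
  moreover have "c \<le> f (max N N1)"
    using assms(2) by simp
  ultimately show False
    by simp
qed

lemma lc_tendsto_upper_bound: "lc_tendsto f L \<Longrightarrow> \<forall>n\<ge>N. f n \<le> c \<Longrightarrow> L \<le> c"
  using lc_tendsto_lower_bound[OF lc_tendsto_uminus, of f L N "- c"] by simp

lemma lc_tendsto_le: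
  assumes "lc_tendsto f L" "lc_tendsto g M" "\<forall>n. f n \<le> g n"
  shows "L \<le> M"
  using lc_tendsto_lower_bound[OF lc_tendsto_diff[OF assms(2,1)], of 0 0] assms(3) by simp

lemma lc_tendsto_even_indices: "lc_tendsto f L \<Longrightarrow> lc_tendsto (\<lambda>n. f (2 * n)) L"
  unfolding lc_tendsto_iff_vanishes by (metis (no_types, lifting) le_trans mult_2 le_add1)

lemma lc_psum_eq_sum: "lc_psum f n = sum f {..<n}"
  by (induction n) (simp_all add: add.commute)

lemma lc_sums_summable: "lc_sums f s \<Longrightarrow> lc_summable f"
  by (auto simp: lc_summable_def)

lemma lc_sums_unique: "lc_sums f s \<Longrightarrow> lc_suminf f = s"
  unfolding lc_suminf_def lc_sums_def by (rule the_equality) (auto intro: lc_tendsto_unique)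

lemma lc_summable_sums: "lc_summable f \<Longrightarrow> lc_sums f (lc_suminf f)"
  using lc_sums_unique by (auto simp: lc_summable_def)

lemma lc_summable_terms_vanish:
  assumes "lc_summable f"
  shows "\<exists>N. \<forall>n\<ge>N. vanishes_upto Q (f n)"
proof -
  obtain N where N: "\<forall>n\<ge>N. vanishes_upto Q (lc_psum f n - lc_suminf f)"
    using lc_summable_sums[OF assms] by (auto simp: lc_sums_def lc_tendsto_iff_vanishes)
  have "vanishes_upto Q ((lc_psum f (Suc n) - lc_suminf f) - (lc_psum f n - lc_suminf f))"
    if "n \<ge> N" for n
    using N that by (metis vanishes_upto_diff le_SucI)
  then show ?thesis
    by auto
qed

lemma lc_rep_psum_stable:
  assumes "\<forall>m\<ge>N. vanishes_upto q (f m)" "n \<ge> N" "p \<le> q"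
  shows "lc_rep (lc_psum f n) p = lc_rep (lc_psum f N) p"
  using assms(2)
proof (induction n)
  case (Suc n)
  then show ?case
    using assms(1,3) by (cases "Suc n = N") (auto simp: vanishes_upto_def)
qed simp

text \<open>The sum is assembled coefficientwise: at each order the partial sums are eventually
  constant.\<close>
lemma lc_summable_if_terms_vanish:
  assumes "\<And>Q. \<exists>N. \<forall>n\<ge>N. vanishes_upto Q (f n)"
  shows "lc_summable f"
proof -
  have "\<forall>q. \<exists>N. \<forall>n\<ge>N. vanishes_upto q (f n)"
    using assms by blast
  then have "\<exists>N. \<forall>q. \<forall>n\<ge>N q. vanishes_upto q (f n)"
    by (rule choice)
  then obtain N where N: "\<And>q. \<forall>n\<ge>N q. vanishes_upto q (f n)"
    by blast
  define L where "L q = lc_rep (lc_psum f (N q)) q" for q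
  have psum_eq_L: "lc_rep (lc_psum f n) p = L p" if "p \<le> q" "n \<ge> N q" for p q n
  proof -
    have Nq: "\<forall>m\<ge>N q. vanishes_upto p (f m)"
      using N[of q] vanishes_upto_mono[OF \<open>p \<le> q\<close>] by blast
    have "lc_rep (lc_psum f n) p = lc_rep (lc_psum f (max (N p) (N q))) p"
      using lc_rep_psum_stable[OF Nq, of n p] lc_rep_psum_stable[OF Nq, of "max (N p) (N q)" p] that
      by simp
    also have "\<dots> = L p"
      using lc_rep_psum_stable[OF N[of p], of "max (N p) (N q)" p] by (simp add: L_def)
    finally show ?thesis .
  qed
  have "left_finite L"
    unfolding left_finite_def
  proof
    fix q
    have "{p. p \<le> q \<and> L p \<noteq> 0} \<subseteq> {p. p \<le> q \<and> lc_rep (lc_psum f (N q)) p \<noteq> 0}"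
      using psum_eq_L by auto
    then show "finite {p. p \<le> q \<and> L p \<noteq> 0}"
      using left_finite_lc_rep[of "lc_psum f (N q)"] unfolding left_finite_def by (meson finite_subset)
  qed
  with psum_eq_L have "\<forall>n\<ge>N Q. vanishes_upto Q (lc_psum f n - Abs_lc L)" for Q
    by (auto simp: vanishes_upto_def)
  then have "lc_sums f (Abs_lc L)"
    unfolding lc_sums_def lc_tendsto_iff_vanishes by blast
  then show ?thesis
    by (rule lc_sums_summable)
qed

lemma lc_sums_add:
  assumes "lc_sums f a" "lc_sums g b"
  shows "lc_sums (\<lambda>n. f n + g n) (a + b)"
proof -
  have "lc_psum (\<lambda>n. f n + g n) = (\<lambda>n. lc_psum f n + lc_psum g n)"
  proof
    show "lc_psum (\<lambda>n. f n + g n) n = lc_psum f n + lc_psum g n" for n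
      by (induction n) (simp_all add: algebra_simps)
  qed
  then show ?thesis
    using lc_tendsto_add assms unfolding lc_sums_def by simp
qed

lemma lc_sums_diff:
  assumes "lc_sums f a" "lc_sums g b"
  shows "lc_sums (\<lambda>n. f n - g n) (a - b)"
proof -
  have "lc_psum (\<lambda>n. f n - g n) = (\<lambda>n. lc_psum f n - lc_psum g n)"
  proof
    show "lc_psum (\<lambda>n. f n - g n) n = lc_psum f n - lc_psum g n" for n
      by (induction n) (simp_all add: algebra_simps)
  qed
  then show ?thesis
    using lc_tendsto_diff assms unfolding lc_sums_def by simp
qed

lemma lc_suminf_add:
  assumes "lc_summable f" "lc_summable g"
  shows "lc_summable (\<lambda>n. f n + g n)" "lc_suminf (\<lambda>n. f n + g n) = lc_suminf f + lc_suminf g"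
  using lc_sums_add[OF lc_summable_sums[OF assms(1)] lc_summable_sums[OF assms(2)]]
  by (auto intro: lc_sums_summable lc_sums_unique)

lemma lc_summable_comparison:
  assumes "\<And>n. 0 \<le> f n" "\<And>n. f n \<le> g n" "lc_summable g"
  shows "lc_summable f" "lc_suminf f \<le> lc_suminf g"
proof -
  show f: "lc_summable f"
  proof (rule lc_summable_if_terms_vanish)
    fix Q
    obtain N where "\<forall>n\<ge>N. vanishes_upto Q (g n)"
      using lc_summable_terms_vanish[OF assms(3)] by blast
    then show "\<exists>N. \<forall>n\<ge>N. vanishes_upto Q (f n)"
      using vanishes_upto_le assms(1,2) by blast
  qed
  have "lc_psum f n \<le> lc_psum g n" for n
    using assms(2) by (induction n) (simp_all add: add_mono)
  then show "lc_suminf f \<le> lc_suminf g"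
    using lc_tendsto_le lc_summable_sums[OF f] lc_summable_sums[OF assms(3)]
    unfolding lc_sums_def by blast
qed

lemma lc_psum_le_suminf:
  assumes "\<And>n. 0 \<le> f n" "lc_summable f"
  shows "lc_psum f n \<le> lc_suminf f"
proof -
  have "lc_psum f n \<le> lc_psum f m" if "n \<le> m" for m
    using that
  proof (induction m)
    case (Suc m)
    show ?case
    proof (cases "n = Suc m")
      case False
      then have "lc_psum f n \<le> lc_psum f m"
        using Suc by simp
      also have "\<dots> \<le> lc_psum f (Suc m)"
        using assms(1)[of m] by simp
      finally show ?thesis .
    qed simp
  qed simp
  then show ?thesis
    using lc_tendsto_lower_bound[of "lc_psum f" "lc_suminf f" n] lc_summable_sums[OF assms(2)]
    unfolding lc_sums_def by blast
qed

lemma lc_suminf_nonneg: "(\<And>n. 0 \<le> f n) \<Longrightarrow> lc_summable f \<Longrightarrow> 0 \<le> lc_suminf f"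
  using lc_psum_le_suminf[of f 0] by simp

lemma vanishes_upto_suminf:
  assumes "\<And>n. vanishes_upto Q (f n)" "lc_summable f"
  shows "vanishes_upto Q (lc_suminf f)"
proof -
  obtain N where N: "\<forall>n\<ge>N. vanishes_upto Q (lc_psum f n - lc_suminf f)"
    using lc_summable_sums[OF assms(2)] by (auto simp: lc_sums_def lc_tendsto_iff_vanishes)
  have "vanishes_upto Q (lc_psum f N)"
    using assms(1) by (induction N) (auto intro: vanishes_upto_add)
  then have "vanishes_upto Q (lc_psum f N - (lc_psum f N - lc_suminf f))"
    using N by (metis vanishes_upto_diff order_refl)
  then show ?thesis
    by simp
qed

lemma lc_suminf_tail_less:
  assumes "lc_summable f" "0 < e"
  shows "\<exists>N. \<forall>K\<ge>N. lc_suminf f - sum f {..<K} < e"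
proof -
  obtain Q where Q: "\<not> vanishes_upto Q e"
    using assms(2) ex_not_vanishes_upto by (metis less_irrefl)
  obtain N where "\<forall>n\<ge>N. vanishes_upto Q (lc_psum f n - lc_suminf f)"
    using lc_summable_sums[OF assms(1)] by (auto simp: lc_sums_def lc_tendsto_iff_vanishes)
  then have "\<forall>K\<ge>N. vanishes_upto Q (lc_suminf f - sum f {..<K})"
    by (simp add: lc_psum_eq_sum vanishes_upto_commute)
  then show ?thesis
    using vanishes_upto_less[OF _ assms(2) Q] by blast
qed

lemma lc_convergent_if_gaps_bounded:
  assumes "lc_tendsto E 0" "\<And>m n. x m - x n \<le> E m + E n"
  shows "\<exists>L. lc_tendsto x L"
proof -
  have "lc_summable (\<lambda>k. x (Suc k) - x k)"
  proof (rule lc_summable_if_terms_vanish)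
    fix Q
    obtain N where N: "\<forall>n\<ge>N. vanishes_upto Q (E n - 0)"
      using assms(1) by (auto simp: lc_tendsto_iff_vanishes)
    have "vanishes_upto Q (x (Suc k) - x k)" if "k \<ge> N" for k
    proof (rule vanishes_upto_bounded)
      show "vanishes_upto Q (E (Suc k) + E k)"
        using N that by (simp add: vanishes_upto_add)
      show "x (Suc k) - x k \<le> E (Suc k) + E k"
        by (rule assms(2))
      show "- (E (Suc k) + E k) \<le> x (Suc k) - x k"
        using assms(2)[of k "Suc k"] by (subst minus_le_iff) (simp add: add.commute)
    qed
    then show "\<exists>N. \<forall>k\<ge>N. vanishes_upto Q (x (Suc k) - x k)"
      by blast
  qed
  then obtain s where "lc_tendsto (lc_psum (\<lambda>k. x (Suc k) - x k)) s"
    by (auto simp: lc_summable_def lc_sums_def)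
  moreover have "lc_psum (\<lambda>k. x (Suc k) - x k) = (\<lambda>n. x n - x 0)"
  proof
    show "lc_psum (\<lambda>k. x (Suc k) - x k) n = x n - x 0" for n
      by (induction n) simp_all
  qed
  ultimately have "lc_tendsto (\<lambda>n. x n - x 0) s"
    by simp
  from lc_tendsto_add[OF this lc_tendsto_const[of "x 0"]] show ?thesis
    by auto
qed

definition interleave :: "(nat \<Rightarrow> 'a) \<Rightarrow> (nat \<Rightarrow> 'a) \<Rightarrow> nat \<Rightarrow> 'a" where
  "interleave f g n = (if even n then f (n div 2) else g (n div 2))"

lemma lc_sums_interleave:
  assumes "lc_sums f a" "lc_sums g b"
  shows "lc_sums (interleave f g) (a + b)"
proof -
  have "lc_summable (interleave f g)"
  proof (rule lc_summable_if_terms_vanish)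
    fix Q
    obtain N1 where "\<forall>n\<ge>N1. vanishes_upto Q (f n)"
      using lc_summable_terms_vanish lc_sums_summable[OF assms(1)] by blast
    moreover obtain N2 where "\<forall>n\<ge>N2. vanishes_upto Q (g n)"
      using lc_summable_terms_vanish lc_sums_summable[OF assms(2)] by blast
    ultimately have "\<forall>n\<ge>2 * (N1 + N2). vanishes_upto Q (interleave f g n)"
      by (auto simp: interleave_def)
    then show "\<exists>N. \<forall>n\<ge>N. vanishes_upto Q (interleave f g n)"
      by blast
  qed
  then obtain L where L: "lc_tendsto (lc_psum (interleave f g)) L"
    by (auto simp: lc_summable_def lc_sums_def)
  have "lc_psum (interleave f g) (2 * n) = lc_psum f n + lc_psum g n" for n
    by (induction n) (simp_all add: interleave_def algebra_simps)
  then have "lc_tendsto (\<lambda>n. lc_psum f n + lc_psum g n) L"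
    using lc_tendsto_even_indices[OF L] by simp
  moreover have "lc_tendsto (\<lambda>n. lc_psum f n + lc_psum g n) (a + b)"
    using assms by (simp add: lc_sums_def lc_tendsto_add)
  ultimately have "L = a + b"
    by (rule lc_tendsto_unique)
  then show ?thesis
    using L by (simp add: lc_sums_def)
qed

lemma is_inf_unique:
  assumes "is_inf T m" "is_inf T m'"
  shows "m = m'"
proof -
  have "m' \<le> m" "m \<le> m'"
    using assms unfolding is_inf_def by blast+
  then show ?thesis
    by simp
qed

lemma is_sup_unique:
  assumes "is_sup T m" "is_sup T m'"
  shows "m = m'"
proof -
  have "m \<le> m'" "m' \<le> m"
    using assms unfolding is_sup_def by blast+
  then show ?thesis
    by simp
qed

lemma lc_tendsto_monom_0: "lc_tendsto (\<lambda>n. lc_monom c (of_nat n)) 0"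
  unfolding lc_tendsto_iff_vanishes
proof
  fix Q :: rat
  obtain N :: nat where "Q < of_nat N"
    using reals_Archimedean2 by blast
  then have "\<forall>n\<ge>N. vanishes_upto Q (lc_monom c (of_nat n) - 0)"
    by (simp add: vanishes_upto_monom less_le_trans)
  then show "\<exists>N. \<forall>n\<ge>N. vanishes_upto Q (lc_monom c (of_nat n) - 0)"
    by blast
qed

lemma lc_tendsto_0_if_bounded:
  assumes "lc_tendsto g 0" "\<And>n. 0 \<le> f n" "\<And>n. f n \<le> g n"
  shows "lc_tendsto f 0"
  using assms(1) vanishes_upto_le[OF assms(2,3)] by (simp add: lc_tendsto_iff_vanishes) blast

lemma is_inf_if_lower_bounds_converge:
  assumes x: "\<And>n. x n \<in> T" and l: "\<And>n y. y \<in> T \<Longrightarrow> l n \<le> y"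
    and "lc_tendsto x L" "lc_tendsto (\<lambda>n. x n - l n) 0"
  shows "is_inf T L"
  unfolding is_inf_def
proof (intro conjI ballI allI impI)
  fix y
  assume "y \<in> T"
  have "lc_tendsto (\<lambda>n. x n - (x n - l n)) (L - 0)"
    using assms(3,4) by (rule lc_tendsto_diff)
  then have "lc_tendsto l L"
    by simp
  then show "L \<le> y"
    using l[OF \<open>y \<in> T\<close>] by (intro lc_tendsto_upper_bound[of l L 0]) simp_all
next
  fix m'
  assume "\<forall>t\<in>T. m' \<le> t"
  then show "m' \<le> L"
    using lc_tendsto_lower_bound[OF assms(3), of 0] x by blast
qed

lemma ex_is_inf_if_narrow:
  assumes "\<And>e. 0 < e \<Longrightarrow> \<exists>x\<in>T. \<exists>l. (\<forall>y\<in>T. l \<le> y) \<and> x - l \<le> e"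
  shows "\<exists>m. is_inf T m"
proof -
  define E where "E n = lc_monom 1 (of_nat n)" for n :: nat
  have E_pos: "0 < E n" for n
    by (simp add: E_def lc_monom_pos)
  have "\<exists>p. fst p \<in> T \<and> (\<forall>y\<in>T. snd p \<le> y) \<and> fst p - snd p \<le> E n" for n
  proof -
    obtain x l where "x \<in> T" "\<forall>y\<in>T. l \<le> y" "x - l \<le> E n"
      using assms[OF E_pos] by blast
    then show ?thesis
      by (intro exI[of _ "(x, l)"]) simp
  qed
  then obtain P where P: "\<forall>n. fst (P n) \<in> T \<and> (\<forall>y\<in>T. snd (P n) \<le> y) \<and> fst (P n) - snd (P n) \<le> E n"
    using choice[of "\<lambda>n p. fst p \<in> T \<and> (\<forall>y\<in>T. snd p \<le> y) \<and> fst p - snd p \<le> E n"] by blast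
  define x where "x n = fst (P n)" for n
  define l where "l n = snd (P n)" for n
  have x: "x n \<in> T" and l: "y \<in> T \<Longrightarrow> l n \<le> y" and xl: "x n - l n \<le> E n" for n y
    using P unfolding x_def l_def by blast+
  have gap: "x m - x n \<le> E m + E n" for m n
  proof -
    have "x m - x n \<le> x m - l m"
      using l[OF x[of n], of m] by (rule diff_left_mono)
    also have "\<dots> \<le> E m + E n"
      using xl[of m] E_pos[of n] by (simp add: add_increasing2)
    finally show ?thesis .
  qed
  obtain L where "lc_tendsto x L"
    using lc_convergent_if_gaps_bounded[OF lc_tendsto_monom_0 gap[unfolded E_def]] by blast
  moreover have "lc_tendsto (\<lambda>n. x n - l n) 0"
    using lc_tendsto_0_if_bounded[OF lc_tendsto_monom_0, of "\<lambda>n. x n - l n" 1] l[OF x] xl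
    by (simp add: E_def)
  ultimately have "is_inf T L"
    using is_inf_if_lower_bounds_converge[where x = x and l = l, OF x l] by blast
  then show ?thesis
    by blast
qed

definition filler :: "rat \<Rightarrow> nat \<Rightarrow> levi_civita" where
  "filler Q n = lc_monom 1 (Q + of_nat n + 1)"

lemma filler_pos: "0 < filler Q n"
  by (simp add: filler_def lc_monom_pos)

lemma summable_filler: "lc_summable (filler Q)"
proof (rule lc_summable_if_terms_vanish)
  fix Q'
  obtain N :: nat where "Q' - Q < of_nat N"
    using reals_Archimedean2 by blast
  then have "\<forall>n\<ge>N. vanishes_upto Q' (filler Q n)"
    unfolding filler_def by (auto intro!: vanishes_upto_monom)
  then show "\<exists>N. \<forall>n\<ge>N. vanishes_upto Q' (filler Q n)"
    by blast
qed

lemma ex_filler_sum_less: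
  assumes "0 < e"
  obtains Q where "lc_suminf (filler Q) < e"
proof -
  obtain Q where "\<not> vanishes_upto Q e"
    using assms ex_not_vanishes_upto by (metis less_irrefl)
  moreover have "vanishes_upto Q (lc_suminf (filler Q))"
    by (rule vanishes_upto_suminf[OF _ summable_filler]) (simp add: filler_def vanishes_upto_monom)
  ultimately show ?thesis
    using that vanishes_upto_less[OF _ assms] by blast
qed

lemma ivl_len_pos: "is_ivl I \<Longrightarrow> 0 < ivl_len I"
  by (cases I) auto

definition ivl_lo :: "lc_ivl \<Rightarrow> levi_civita" where
  "ivl_lo I = fst I"

definition ivl_hi :: "lc_ivl \<Rightarrow> levi_civita" where
  "ivl_hi I = fst (snd I)"

lemma ivl_len_eq: "ivl_len I = ivl_hi I - ivl_lo I"
  by (cases I) (simp add: ivl_lo_def ivl_hi_def)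

lemma ivl_set_bounds: "x \<in> ivl_set I \<Longrightarrow> ivl_lo I \<le> x \<and> x \<le> ivl_hi I"
  by (cases I) (auto simp: ivl_lo_def ivl_hi_def split: if_splits)

definition ivls_len :: "(nat \<Rightarrow> lc_ivl) \<Rightarrow> nat \<Rightarrow> levi_civita" where
  "ivls_len S n = ivl_len (S n)"

definition summable_ivls :: "(nat \<Rightarrow> lc_ivl) \<Rightarrow> bool" where
  "summable_ivls S \<longleftrightarrow> (\<forall>n. is_ivl (S n)) \<and> lc_summable (ivls_len S)"

definition ivls_union :: "(nat \<Rightarrow> lc_ivl) \<Rightarrow> levi_civita set" where
  "ivls_union S = (\<Union>n. ivl_set (S n))"

definition ivls_total :: "(nat \<Rightarrow> lc_ivl) \<Rightarrow> levi_civita" where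
  "ivls_total S = lc_suminf (ivls_len S)"

lemma is_cover_iff: "is_cover S X \<longleftrightarrow> summable_ivls S \<and> X \<subseteq> ivls_union S"
  by (auto simp: is_cover_def summable_ivls_def ivls_union_def ivls_len_def[abs_def])

lemma cover_sums_iff: "t \<in> cover_sums X \<longleftrightarrow> (\<exists>S. is_cover S X \<and> t = ivls_total S)"
  by (auto simp: cover_sums_def ivls_total_def ivls_len_def[abs_def])

lemma ivls_len_nonneg: "summable_ivls S \<Longrightarrow> 0 \<le> ivls_len S n"
  by (simp add: summable_ivls_def ivls_len_def ivl_len_pos less_imp_le)

lemma ivls_total_nonneg: "summable_ivls S \<Longrightarrow> 0 \<le> ivls_total S"
  unfolding ivls_total_def
  by (rule lc_suminf_nonneg) (auto simp: ivls_len_nonneg summable_ivls_def)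

lemma ivls_interleave:
  assumes "summable_ivls S" "summable_ivls T"
  shows "summable_ivls (interleave S T)"
    and "ivls_union (interleave S T) = ivls_union S \<union> ivls_union T"
    and "ivls_total (interleave S T) = ivls_total S + ivls_total T"
proof -
  have "ivls_len (interleave S T) = interleave (ivls_len S) (ivls_len T)"
    by (auto simp: ivls_len_def interleave_def)
  then have sums: "lc_sums (ivls_len (interleave S T)) (ivls_total S + ivls_total T)"
    using assms lc_sums_interleave lc_summable_sums
    by (simp add: summable_ivls_def ivls_total_def)
  then show "summable_ivls (interleave S T)"
    using assms lc_sums_summable by (auto simp: summable_ivls_def interleave_def)
  show "ivls_total (interleave S T) = ivls_total S + ivls_total T"
    using sums lc_sums_unique by (simp add: ivls_total_def)
  have "Suc (2 * n) div 2 = n" for n :: nat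
    by presburger
  then have "interleave S T (2 * n) = S n" "interleave S T (Suc (2 * n)) = T n" for n
    by (simp_all add: interleave_def)
  then have "ivl_set (S n) \<subseteq> ivls_union (interleave S T)" "ivl_set (T n) \<subseteq> ivls_union (interleave S T)"
    for n
    unfolding ivls_union_def by (metis UNIV_I UN_upper)+
  moreover have "ivls_union (interleave S T) \<subseteq> ivls_union S \<union> ivls_union T"
    by (auto simp: ivls_union_def interleave_def split: if_splits)
  ultimately show "ivls_union (interleave S T) = ivls_union S \<union> ivls_union T"
    unfolding ivls_union_def[of S] ivls_union_def[of T] by blast
qed

text \<open>Padding for the gaps of a family of intervals; it costs \<open>lc_suminf (filler Q)\<close>, which
  can be made arbitrarily small.\<close>
definition null_cover :: "rat \<Rightarrow> nat \<Rightarrow> lc_ivl" where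
  "null_cover Q n = (0, filler Q n, True, True)"

lemma summable_null_cover: "summable_ivls (null_cover Q)"
proof -
  have "ivls_len (null_cover Q) = filler Q"
    by (auto simp: ivls_len_def null_cover_def)
  then show ?thesis
    using filler_pos summable_filler by (simp add: summable_ivls_def null_cover_def)
qed

lemma ivls_total_null_cover: "ivls_total (null_cover Q) = lc_suminf (filler Q)"
proof -
  have "ivls_len (null_cover Q) = filler Q"
    by (auto simp: ivls_len_def null_cover_def)
  then show ?thesis
    by (simp add: ivls_total_def)
qed

lemma ex_small_null_cover:
  assumes "0 < e"
  obtains Q where "ivls_total (null_cover Q) < e"
  using ex_filler_sum_less[OF assms] ivls_total_null_cover by metis

lemma Mu_is_inf:
  assumes "outer_measurable X"
  shows "is_inf (cover_sums X) (Mu X)"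
proof -
  obtain m where m: "is_inf (cover_sums X) m"
    using assms unfolding outer_measurable_def by blast
  then have "Mu X = m"
    unfolding Mu_def using is_inf_unique by blast
  with m show ?thesis
    by simp
qed

lemma Mu_le_cover:
  assumes "outer_measurable X" "is_cover S X"
  shows "Mu X \<le> ivls_total S"
proof -
  have "ivls_total S \<in> cover_sums X"
    using assms(2) cover_sums_iff by blast
  then show ?thesis
    using Mu_is_inf[OF assms(1)] unfolding is_inf_def by blast
qed

lemma Mu_greatest:
  assumes "outer_measurable X" "\<And>S. is_cover S X \<Longrightarrow> c \<le> ivls_total S"
  shows "c \<le> Mu X"
proof -
  have "\<forall>t\<in>cover_sums X. c \<le> t"
    using assms(2) by (auto simp: cover_sums_iff)
  then show ?thesis
    using Mu_is_inf[OF assms(1)] unfolding is_inf_def by blast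
qed

lemma Mu_approx:
  assumes "outer_measurable X" "0 < e"
  obtains S where "is_cover S X" "ivls_total S < Mu X + e"
proof -
  have "\<not> (\<forall>S. is_cover S X \<longrightarrow> Mu X + e \<le> ivls_total S)"
  proof
    assume "\<forall>S. is_cover S X \<longrightarrow> Mu X + e \<le> ivls_total S"
    then have "Mu X + e \<le> Mu X"
      using Mu_greatest[OF assms(1)] by blast
    with assms(2) show False
      by simp
  qed
  then show ?thesis
    using that by (auto simp: not_le)
qed

section \<open>Carath\'eodory's condition for sets that split covers\<close>

definition splits_covers :: "levi_civita set \<Rightarrow> bool" where
  "splits_covers E \<longleftrightarrow> (\<forall>S e. summable_ivls S \<longrightarrow> 0 < e \<longrightarrow>
     (\<exists>S1 S2. summable_ivls S1 \<and> summable_ivls S2 \<and>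
        E \<inter> ivls_union S \<subseteq> ivls_union S1 \<and> - E \<inter> ivls_union S \<subseteq> ivls_union S2 \<and>
        ivls_total S1 + ivls_total S2 \<le> ivls_total S + e))"

lemma splits_coversE:
  assumes "splits_covers E" "summable_ivls S" "0 < e"
  obtains S1 S2 where "summable_ivls S1" "summable_ivls S2"
    "E \<inter> ivls_union S \<subseteq> ivls_union S1" "- E \<inter> ivls_union S \<subseteq> ivls_union S2"
    "ivls_total S1 + ivls_total S2 \<le> ivls_total S + e"
  using assms unfolding splits_covers_def by blast

lemma Mu_le_split_covers:
  assumes "outer_measurable B" "is_cover C1 (E \<inter> B)" "is_cover C2 (- E \<inter> B)"
  shows "Mu B \<le> ivls_total C1 + ivls_total C2"
proof -
  have C: "summable_ivls C1" "summable_ivls C2"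
    using assms(2,3) by (auto simp: is_cover_iff)
  have "is_cover (interleave C1 C2) B"
    using assms(2,3) ivls_interleave[OF C] by (auto simp: is_cover_iff)
  then show ?thesis
    using Mu_le_cover[OF assms(1)] ivls_interleave(3)[OF C] by metis
qed

lemma split_covers_near_Mu:
  assumes "splits_covers E" "outer_measurable B" "0 < e"
  obtains C1 C2 where "is_cover C1 (E \<inter> B)" "is_cover C2 (- E \<inter> B)"
    "ivls_total C1 + ivls_total C2 \<le> Mu B + e"
proof -
  obtain S where S: "is_cover S B" "ivls_total S < Mu B + lc_half e"
    using Mu_approx[OF assms(2) lc_half_pos[OF assms(3)]] by blast
  then have "summable_ivls S"
    by (simp add: is_cover_iff)
  then obtain C1 C2 where C: "summable_ivls C1" "summable_ivls C2"
      "E \<inter> ivls_union S \<subseteq> ivls_union C1" "- E \<inter> ivls_union S \<subseteq> ivls_union C2"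
      "ivls_total C1 + ivls_total C2 \<le> ivls_total S + lc_half e"
    using splits_coversE[OF assms(1) _ lc_half_pos[OF assms(3)]] by blast
  have "ivls_total C1 + ivls_total C2 \<le> Mu B + lc_half e + lc_half e"
    using C(5) S(2) by (meson add_right_mono less_imp_le order_trans)
  then have "ivls_total C1 + ivls_total C2 \<le> Mu B + e"
    by (simp add: lc_half_half add.assoc)
  moreover have "is_cover C1 (E \<inter> B)" "is_cover C2 (- E \<inter> B)"
    using C S(1) by (auto simp: is_cover_iff)
  ultimately show ?thesis
    using that by blast
qed

lemma splits_covers_Compl: "splits_covers E \<Longrightarrow> splits_covers (- E)"
  unfolding splits_covers_def by (metis add.commute double_compl)

lemma outer_measurable_Int_if_splits_covers:
  assumes "splits_covers E" "outer_measurable B"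
  shows "outer_measurable (E \<inter> B)"
  unfolding outer_measurable_def
proof (rule ex_is_inf_if_narrow)
  fix e :: levi_civita
  assume "0 < e"
  then obtain C1 C2 where C: "is_cover C1 (E \<inter> B)" "is_cover C2 (- E \<inter> B)"
      "ivls_total C1 + ivls_total C2 \<le> Mu B + e"
    using split_covers_near_Mu[OF assms] by blast
  have "\<forall>y\<in>cover_sums (E \<inter> B). Mu B - ivls_total C2 \<le> y"
    using Mu_le_split_covers[OF assms(2) _ C(2)] by (auto simp: cover_sums_iff algebra_simps)
  moreover have "ivls_total C1 - (Mu B - ivls_total C2) \<le> e"
    using C(3) by (simp add: algebra_simps)
  moreover have "ivls_total C1 \<in> cover_sums (E \<inter> B)"
    using C(1) cover_sums_iff by blast
  ultimately show "\<exists>x\<in>cover_sums (E \<inter> B). \<exists>l. (\<forall>y\<in>cover_sums (E \<inter> B). l \<le> y) \<and> x - l \<le> e"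
    by blast
qed

lemma caratheodory_if_splits_covers:
  assumes "splits_covers E" "outer_measurable B"
  shows "outer_measurable (E \<inter> B)" "outer_measurable (- E \<inter> B)"
    and "Mu B = Mu (E \<inter> B) + Mu (- E \<inter> B)"
proof -
  show E: "outer_measurable (E \<inter> B)" and E': "outer_measurable (- E \<inter> B)"
    using outer_measurable_Int_if_splits_covers splits_covers_Compl assms by blast+
  have C2: "Mu B - ivls_total C2 \<le> Mu (E \<inter> B)" if "is_cover C2 (- E \<inter> B)" for C2
  proof (rule Mu_greatest[OF E])
    fix C1
    assume "is_cover C1 (E \<inter> B)"
    from Mu_le_split_covers[OF assms(2) this that] show "Mu B - ivls_total C2 \<le> ivls_total C1"
      by (simp add: algebra_simps)
  qed
  have "Mu B - Mu (E \<inter> B) \<le> Mu (- E \<inter> B)"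
  proof (rule Mu_greatest[OF E'])
    fix C2
    assume "is_cover C2 (- E \<inter> B)"
    from C2[OF this] show "Mu B - Mu (E \<inter> B) \<le> ivls_total C2"
      by (simp add: algebra_simps)
  qed
  moreover have "Mu (E \<inter> B) + Mu (- E \<inter> B) \<le> Mu B + e" if e: "0 < e" for e
  proof -
    obtain C1 C2 where C: "is_cover C1 (E \<inter> B)" "is_cover C2 (- E \<inter> B)"
        "ivls_total C1 + ivls_total C2 \<le> Mu B + e"
      using split_covers_near_Mu[OF assms e] by blast
    have "Mu (E \<inter> B) + Mu (- E \<inter> B) \<le> ivls_total C1 + ivls_total C2"
      using Mu_le_cover[OF E C(1)] Mu_le_cover[OF E' C(2)] by (rule add_mono)
    then show ?thesis
      using C(3) by (rule order_trans)
  qed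
  then have "Mu (E \<inter> B) + Mu (- E \<inter> B) \<le> Mu B"
    by (rule lc_le_epsilon)
  ultimately show "Mu B = Mu (E \<inter> B) + Mu (- E \<inter> B)"
    by (simp add: algebra_simps)
qed

lemma splits_covers_empty: "splits_covers {}"
  unfolding splits_covers_def
proof (intro allI impI)
  fix S :: "nat \<Rightarrow> lc_ivl" and e :: levi_civita
  assume "summable_ivls S" "0 < e"
  moreover obtain Q where "ivls_total (null_cover Q) < e"
    using ex_small_null_cover[OF \<open>0 < e\<close>] .
  ultimately show "\<exists>S1 S2. summable_ivls S1 \<and> summable_ivls S2 \<and> {} \<inter> ivls_union S \<subseteq> ivls_union S1
      \<and> - {} \<inter> ivls_union S \<subseteq> ivls_union S2 \<and> ivls_total S1 + ivls_total S2 \<le> ivls_total S + e"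
    using summable_null_cover by (intro exI[of _ "null_cover Q"] exI[of _ S]) (simp add: add.commute)
qed

lemma splits_covers_Int:
  assumes "splits_covers E" "splits_covers F"
  shows "splits_covers (E \<inter> F)"
  unfolding splits_covers_def
proof (intro allI impI)
  fix S :: "nat \<Rightarrow> lc_ivl" and e :: levi_civita
  assume S: "summable_ivls S" and e: "0 < e"
  obtain S1 S2 where T: "summable_ivls S1" "summable_ivls S2"
      "E \<inter> ivls_union S \<subseteq> ivls_union S1" "- E \<inter> ivls_union S \<subseteq> ivls_union S2"
      "ivls_total S1 + ivls_total S2 \<le> ivls_total S + lc_half e"
    using splits_coversE[OF assms(1) S lc_half_pos[OF e]] by blast
  obtain D1 D2 where D: "summable_ivls D1" "summable_ivls D2"
      "F \<inter> ivls_union S1 \<subseteq> ivls_union D1" "- F \<inter> ivls_union S1 \<subseteq> ivls_union D2"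
      "ivls_total D1 + ivls_total D2 \<le> ivls_total S1 + lc_half e"
    using splits_coversE[OF assms(2) T(1) lc_half_pos[OF e]] by blast
  note SD = ivls_interleave[OF T(2) D(2)]
  have "(E \<inter> F) \<inter> ivls_union S \<subseteq> ivls_union D1"
    using T(3) D(3) by blast
  moreover have "- (E \<inter> F) \<inter> ivls_union S \<subseteq> ivls_union (interleave S2 D2)"
    using T(3,4) D(4) SD(2) by blast
  moreover have "ivls_total D1 + ivls_total (interleave S2 D2) \<le> ivls_total S + e"
  proof -
    have "ivls_total D1 + ivls_total (interleave S2 D2) = (ivls_total D1 + ivls_total D2) + ivls_total S2"
      using SD(3) by (simp add: algebra_simps)
    also have "\<dots> \<le> (ivls_total S1 + ivls_total S2) + lc_half e"
      using D(5) by (simp add: algebra_simps)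
    also have "\<dots> \<le> ivls_total S + lc_half e + lc_half e"
      using T(5) by simp
    also have "\<dots> = ivls_total S + e"
      by (simp add: lc_half_half add.assoc)
    finally show ?thesis .
  qed
  ultimately show "\<exists>S1 S2. summable_ivls S1 \<and> summable_ivls S2 \<and> (E \<inter> F) \<inter> ivls_union S \<subseteq> ivls_union S1
      \<and> - (E \<inter> F) \<inter> ivls_union S \<subseteq> ivls_union S2 \<and> ivls_total S1 + ivls_total S2 \<le> ivls_total S + e"
    using D(1) SD(1) by blast
qed

lemma splits_covers_Un: "splits_covers E \<Longrightarrow> splits_covers F \<Longrightarrow> splits_covers (E \<union> F)"
  using splits_covers_Compl[of "- E \<inter> - F"] splits_covers_Int[of "- E" "- F"] splits_covers_Compl
  by (simp add: Compl_Int)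

definition lower_ray :: "levi_civita \<Rightarrow> bool \<Rightarrow> levi_civita set" where
  "lower_ray c incl = {x. x < c \<or> (incl \<and> x = c)}"

text \<open>An empty part is replaced by the interval \<open>[c, c + f]\<close> of length \<open>f\<close>, so that the
  result is still an interval.\<close>
fun clip_below :: "levi_civita \<Rightarrow> bool \<Rightarrow> levi_civita \<Rightarrow> lc_ivl \<Rightarrow> lc_ivl" where
  "clip_below c incl f (lo, hi, lc, rc) =
     (if hi < c then (lo, hi, lc, rc) else if lo < c then (lo, c, lc, incl) else (c, c + f, True, True))"

fun clip_above :: "levi_civita \<Rightarrow> bool \<Rightarrow> levi_civita \<Rightarrow> lc_ivl \<Rightarrow> lc_ivl" where
  "clip_above c incl f (lo, hi, lc, rc) =
     (if c < lo then (lo, hi, lc, rc) else if c < hi then (c, hi, \<not> incl, rc) else (c, c + f, True, True))"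

lemma is_ivl_clip:
  assumes "is_ivl I" "0 < f"
  shows "is_ivl (clip_below c incl f I)" "is_ivl (clip_above c incl f I)"
  using assms by (cases I; auto)+

lemma ivl_len_clip:
  assumes "is_ivl I" "0 < f"
  shows "ivl_len (clip_below c incl f I) + ivl_len (clip_above c incl f I) \<le> ivl_len I + f"
proof -
  obtain lo hi lc rc where I: "I = (lo, hi, lc, rc)"
    by (cases I)
  with assms have "lo < hi"
    by simp
  with assms(2) show ?thesis
    unfolding I by (cases "hi < c"; cases "lo < c"; cases "c < lo"; cases "c < hi") (auto simp: algebra_simps)
qed

lemma mem_clip_below:
  assumes "x \<in> ivl_set I" "x \<in> lower_ray c incl" "0 < f"
  shows "x \<in> ivl_set (clip_below c incl f I)"
proof -
  obtain lo hi lc rc where I: "I = (lo, hi, lc, rc)"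
    by (cases I)
  with assms(1) have "lo \<le> x"
    using ivl_set_bounds by (force simp: ivl_lo_def)
  with assms show ?thesis
    unfolding I by (auto simp: lower_ray_def split: if_splits)
qed

lemma mem_clip_above:
  assumes "x \<in> ivl_set I" "x \<notin> lower_ray c incl" "0 < f"
  shows "x \<in> ivl_set (clip_above c incl f I)"
proof -
  obtain lo hi lc rc where I: "I = (lo, hi, lc, rc)"
    by (cases I)
  with assms(1) have "x \<le> hi"
    using ivl_set_bounds by (force simp: ivl_hi_def)
  then have "\<not> c < hi \<Longrightarrow> x \<le> c + f"
    using assms(3) by (simp add: add_increasing2 less_imp_le)
  with assms \<open>x \<le> hi\<close> show ?thesis
    unfolding I by (auto simp: lower_ray_def split: if_splits)
qed

lemma summable_ivls_split:
  assumes S: "summable_ivls S" and f: "lc_summable f"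
    and ivl: "\<And>n. is_ivl (S1 n)" "\<And>n. is_ivl (S2 n)"
    and len: "\<And>n. ivls_len S1 n + ivls_len S2 n \<le> ivls_len S n + f n"
  shows "summable_ivls S1" "summable_ivls S2"
    and "ivls_total S1 + ivls_total S2 \<le> ivls_total S + lc_suminf f"
proof -
  have nonneg: "0 \<le> ivls_len S1 n" "0 \<le> ivls_len S2 n" for n
    using ivl by (simp_all add: ivls_len_def ivl_len_pos less_imp_le)
  have le: "ivls_len S1 n \<le> ivls_len S n + f n" "ivls_len S2 n \<le> ivls_len S n + f n" for n
    by (rule order_trans[OF add_increasing2[OF nonneg(2) order_refl] len]
        order_trans[OF add_increasing[OF nonneg(1) order_refl] len])+
  note sum = lc_suminf_add[of "ivls_len S" f]
  have sum_S: "lc_summable (\<lambda>n. ivls_len S n + f n)"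
    "lc_suminf (\<lambda>n. ivls_len S n + f n) = ivls_total S + lc_suminf f"
    using sum S f by (auto simp: summable_ivls_def ivls_total_def)
  have sum1: "lc_summable (ivls_len S1)" and sum2: "lc_summable (ivls_len S2)"
    using lc_summable_comparison(1)[OF nonneg(1) le(1) sum_S(1)]
      lc_summable_comparison(1)[OF nonneg(2) le(2) sum_S(1)] .
  then show "summable_ivls S1" "summable_ivls S2"
    using ivl by (simp_all add: summable_ivls_def)
  show "ivls_total S1 + ivls_total S2 \<le> ivls_total S + lc_suminf f"
    using lc_summable_comparison(2)[OF add_nonneg_nonneg[OF nonneg] len sum_S(1)]
      lc_suminf_add[OF sum1 sum2] sum_S(2)
    by (simp add: ivls_total_def)
qed

lemma splits_covers_lower_ray: "splits_covers (lower_ray c incl)"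
  unfolding splits_covers_def
proof (intro allI impI)
  fix S :: "nat \<Rightarrow> lc_ivl" and e :: levi_civita
  assume S: "summable_ivls S" and e: "0 < e"
  obtain Q where Q: "lc_suminf (filler Q) < e"
    using ex_filler_sum_less[OF e] .
  define S1 where "S1 n = clip_below c incl (filler Q n) (S n)" for n
  define S2 where "S2 n = clip_above c incl (filler Q n) (S n)" for n
  have ivl: "is_ivl (S n)" for n
    using S by (simp add: summable_ivls_def)
  note split = summable_ivls_split[OF S summable_filler, of S1 S2]
  have "is_ivl (S1 n)" "is_ivl (S2 n)" for n
    unfolding S1_def S2_def using is_ivl_clip[OF ivl filler_pos] by blast+
  moreover have "ivls_len S1 n + ivls_len S2 n \<le> ivls_len S n + filler Q n" for n
    unfolding ivls_len_def S1_def S2_def using ivl_len_clip[OF ivl filler_pos] .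
  ultimately have "summable_ivls S1" "summable_ivls S2"
    and "ivls_total S1 + ivls_total S2 \<le> ivls_total S + e"
    using split Q by (blast, blast, meson add_left_mono less_imp_le order_trans)
  moreover have "lower_ray c incl \<inter> ivls_union S \<subseteq> ivls_union S1"
  proof
    fix x
    assume "x \<in> lower_ray c incl \<inter> ivls_union S"
    then obtain n where "x \<in> ivl_set (S n)" "x \<in> lower_ray c incl"
      by (auto simp: ivls_union_def)
    then have "x \<in> ivl_set (S1 n)"
      unfolding S1_def by (rule mem_clip_below[OF _ _ filler_pos])
    then show "x \<in> ivls_union S1"
      by (auto simp: ivls_union_def)
  qed
  moreover have "- lower_ray c incl \<inter> ivls_union S \<subseteq> ivls_union S2"
  proof
    fix x
    assume "x \<in> - lower_ray c incl \<inter> ivls_union S"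
    then obtain n where "x \<in> ivl_set (S n)" "x \<notin> lower_ray c incl"
      by (auto simp: ivls_union_def)
    then have "x \<in> ivl_set (S2 n)"
      unfolding S2_def by (rule mem_clip_above[OF _ _ filler_pos])
    then show "x \<in> ivls_union S2"
      by (auto simp: ivls_union_def)
  qed
  ultimately show "\<exists>S1 S2. summable_ivls S1 \<and> summable_ivls S2
      \<and> lower_ray c incl \<inter> ivls_union S \<subseteq> ivls_union S1 \<and> - lower_ray c incl \<inter> ivls_union S \<subseteq> ivls_union S2
      \<and> ivls_total S1 + ivls_total S2 \<le> ivls_total S + e"
    by blast
qed

lemma splits_covers_ivl_set: "splits_covers (ivl_set I)"
proof -
  obtain a b lc rc where I: "I = (a, b, lc, rc)"
    by (cases I)
  have "ivl_set I = - lower_ray a (\<not> lc) \<inter> lower_ray b rc"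
    by (auto simp: I lower_ray_def)
  then show ?thesis
    by (simp add: splits_covers_Int splits_covers_Compl splits_covers_lower_ray)
qed

section \<open>Covers of an interval\<close>

lemma add_monom_between:
  assumes "\<forall>p<t. lc_rep (c - a) p = 0" "0 < r" "r < lc_rep (c - a) t"
  shows "a < a + lc_monom r t" "a + lc_monom r t < c"
proof -
  show "a < a + lc_monom r t"
    using assms(2) by (simp add: lc_monom_pos)
  have "lc_pos (c - (a + lc_monom r t))"
    unfolding lc_pos_def
  proof (intro exI[of _ t] conjI allI impI)
    show "0 < lc_rep (c - (a + lc_monom r t)) t"
      using assms(3) by (simp add: algebra_simps)
    show "lc_rep (c - (a + lc_monom r t)) q = 0" if "q < t" for q
      using assms(1) that by (simp add: algebra_simps)
  qed
  then show "a + lc_monom r t < c"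
    by (simp add: lc_less_iff)
qed

text \<open>The substitute for Heine-Borel: if \<open>c - a\<close> has a nonzero coefficient \<open>g\<close> at an order
  \<open>t \<le> s\<close>, the uncountably many points \<open>a + lc_monom r t\<close>, \<open>0 < r < g\<close>, have pairwise
  differences that do not vanish up to \<open>s\<close>, so each \<open>P n\<close> contains at most one of them.\<close>
lemma vanishes_upto_if_covered_by_negligible:
  fixes P :: "nat \<Rightarrow> levi_civita set"
  assumes "a < c" and cover: "{x. a < x \<and> x < c} \<subseteq> (\<Union>n. P n)"
    and P: "\<forall>n. \<forall>x\<in>P n. \<forall>y\<in>P n. vanishes_upto s (x - y)"
  shows "vanishes_upto s (c - a)"
proof (rule ccontr)
  assume not_van: "\<not> vanishes_upto s (c - a)"
  obtain t where t: "lc_rep (c - a) t > 0" "\<forall>p<t. lc_rep (c - a) p = 0"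
    using \<open>a < c\<close> by (auto simp: lc_less_iff lc_pos_def)
  obtain p where "p \<le> s" "lc_rep (c - a) p \<noteq> 0"
    using not_van by (auto simp: vanishes_upto_def)
  with t(2) have "t \<le> s"
    by (meson not_less order_trans)
  define g where "g = lc_rep (c - a) t"
  define x where "x r = a + lc_monom r t" for r
  have x_between: "x r \<in> {x. a < x \<and> x < c}" if "r \<in> {0<..<g}" for r
    using add_monom_between[OF t(2)] that by (simp add: x_def g_def)
  then have "\<forall>r\<in>{0<..<g}. \<exists>n. x r \<in> P n"
    using cover by blast
  then obtain n where n: "\<And>r. r \<in> {0<..<g} \<Longrightarrow> x r \<in> P (n r)"
    by metis
  have "inj_on n {0<..<g}"
  proof (rule inj_onI)
    fix r r'
    assume r: "r \<in> {0<..<g}" and r': "r' \<in> {0<..<g}" and "n r = n r'"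
    then have "x r \<in> P (n r)" "x r' \<in> P (n r)"
      using n[OF r] n[OF r'] by simp_all
    then have "vanishes_upto s (x r - x r')"
      using P by blast
    moreover have "x r - x r' = lc_monom (r - r') t"
      by (simp add: x_def lc_monom_diff[symmetric])
    ultimately have "lc_rep (lc_monom (r - r') t) t = 0"
      using \<open>t \<le> s\<close> unfolding vanishes_upto_def by metis
    then show "r = r'"
      by simp
  qed
  then have "countable {0<..<g}"
    by (rule countableI)
  moreover have "0 < g"
    using t(1) by (simp add: g_def)
  ultimately show False
    using uncountable_open_interval by blast
qed

lemma ex_negligible_bound_if_covered:
  fixes P :: "nat \<Rightarrow> levi_civita set"
  assumes "{x. a < x \<and> x < c} \<subseteq> (\<Union>n. P n)"
    and "\<forall>n. \<forall>x\<in>P n. \<forall>y\<in>P n. vanishes_upto s (x - y)"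
  shows "\<exists>\<eta>. vanishes_upto s \<eta> \<and> c - a \<le> \<eta>"
proof (cases "a < c")
  case True
  then show ?thesis
    using vanishes_upto_if_covered_by_negligible[OF True assms] by blast
next
  case False
  then show ?thesis
    by (intro exI[of _ 0]) simp
qed

lemma ex_negligible_bound_before_leftmost:
  fixes P :: "nat \<Rightarrow> levi_civita set"
  assumes P: "\<forall>n. \<forall>x\<in>P n. \<forall>y\<in>P n. vanishes_upto s (x - y)"
    and cover: "{x. a < x \<and> x < b} \<subseteq> (\<Union>i\<in>M. ivl_set (S i)) \<union> (\<Union>n. P n)" and "c \<le> b"
    and leftmost: "\<And>j. j \<in> M \<Longrightarrow> ivl_lo (S j) < b \<Longrightarrow> a < ivl_hi (S j) \<Longrightarrow> c \<le> ivl_lo (S j)"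
  shows "\<exists>\<eta>. vanishes_upto s \<eta> \<and> c - a \<le> \<eta>"
proof (rule ex_negligible_bound_if_covered[OF _ P])
  show "{x. a < x \<and> x < c} \<subseteq> (\<Union>n. P n)"
  proof
    fix x
    assume x: "x \<in> {x. a < x \<and> x < c}"
    with \<open>c \<le> b\<close> have "x < b"
      using less_le_trans by blast
    moreover have "x \<notin> ivl_set (S j)" if "j \<in> M" for j
    proof
      assume "x \<in> ivl_set (S j)"
      then have j: "ivl_lo (S j) \<le> x" "x \<le> ivl_hi (S j)"
        using ivl_set_bounds by blast+
      have "ivl_lo (S j) < b" "a < ivl_hi (S j)"
        using j x \<open>x < b\<close> le_less_trans less_le_trans by blast+
      then have "c \<le> ivl_lo (S j)"
        by (rule leftmost[OF that])
      then have "c \<le> x"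
        using j(1) by (rule order_trans)
      with x show False
        using leD by blast
    qed
    ultimately show "x \<in> (\<Union>n. P n)"
      using cover x by blast
  qed
qed

text \<open>Induction on the finitely many intervals that are not negligible, peeling off the one
  that starts leftmost.\<close>
lemma ivl_len_le_finite_cover:
  fixes P :: "nat \<Rightarrow> levi_civita set" and S :: "nat \<Rightarrow> lc_ivl"
  assumes P: "\<forall>n. \<forall>x\<in>P n. \<forall>y\<in>P n. vanishes_upto s (x - y)" and S: "\<forall>i. is_ivl (S i)"
  shows "finite M \<Longrightarrow> {x. a < x \<and> x < b} \<subseteq> (\<Union>i\<in>M. ivl_set (S i)) \<union> (\<Union>n. P n) \<Longrightarrow>
    \<exists>\<eta>. vanishes_upto s \<eta> \<and> b - a \<le> sum (ivls_len S) M + \<eta>"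
proof (induction M arbitrary: a rule: finite_psubset_induct)
  case (psubset M)
  define K where "K = {i \<in> M. ivl_lo (S i) < b \<and> a < ivl_hi (S i)}"
  show ?case
  proof (cases "K = {}")
    case True
    then obtain \<eta> where "vanishes_upto s \<eta>" "b - a \<le> \<eta>"
      using ex_negligible_bound_before_leftmost[OF P psubset.prems order_refl] by (auto simp: K_def)
    moreover have "0 \<le> sum (ivls_len S) M"
      using S by (intro sum_nonneg) (simp add: ivls_len_def ivl_len_pos less_imp_le)
    ultimately show ?thesis
      using add_increasing by blast
  next
    case False
    have "finite K"
      using psubset.hyps(1) by (simp add: K_def)
    with False obtain i where "i \<in> K" and leftmost: "\<And>j. j \<in> K \<Longrightarrow> ivl_lo (S i) \<le> ivl_lo (S j)"
      using ex_is_arg_min_if_finite[of K "\<lambda>j. ivl_lo (S j)"] by (auto simp: is_arg_min_linorder)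
    then have i: "i \<in> M" "ivl_lo (S i) \<le> b" "a < ivl_hi (S i)"
      by (auto simp: K_def)
    obtain \<eta>1 where \<eta>1: "vanishes_upto s \<eta>1" "ivl_lo (S i) - a \<le> \<eta>1"
      using ex_negligible_bound_before_leftmost[OF P psubset.prems i(2)] leftmost
      by (auto simp: K_def)
    have "{x. ivl_hi (S i) < x \<and> x < b} \<subseteq> (\<Union>j\<in>M - {i}. ivl_set (S j)) \<union> (\<Union>n. P n)"
    proof
      fix x
      assume x: "x \<in> {x. ivl_hi (S i) < x \<and> x < b}"
      then have "x \<in> {x. a < x \<and> x < b}" "x \<notin> ivl_set (S i)"
        using i(3) ivl_set_bounds[of x "S i"] by auto
      then show "x \<in> (\<Union>j\<in>M - {i}. ivl_set (S j)) \<union> (\<Union>n. P n)"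
        using psubset.prems by blast
    qed
    then obtain \<eta>2 where \<eta>2: "vanishes_upto s \<eta>2" "b - ivl_hi (S i) \<le> sum (ivls_len S) (M - {i}) + \<eta>2"
      using psubset.IH[of "M - {i}"] i(1) by blast
    have "b - a = (b - ivl_hi (S i)) + ivls_len S i + (ivl_lo (S i) - a)"
      by (simp add: ivls_len_def ivl_len_eq algebra_simps)
    also have "\<dots> \<le> (sum (ivls_len S) (M - {i}) + \<eta>2) + ivls_len S i + \<eta>1"
      using \<eta>1 \<eta>2 by (intro add_mono) simp_all
    also have "\<dots> = sum (ivls_len S) M + (\<eta>2 + \<eta>1)"
      using psubset.hyps(1) i(1) by (simp add: sum.remove algebra_simps)
    finally show ?thesis
      using vanishes_upto_add[OF \<eta>2(1) \<eta>1(1)] by blast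
  qed
qed

lemma vanishes_upto_diff_ivl_set:
  assumes "x \<in> ivl_set I" "y \<in> ivl_set I" "vanishes_upto s (ivl_len I)"
  shows "vanishes_upto s (x - y)"
proof (rule vanishes_upto_bounded[OF _ _ assms(3)])
  show "x - y \<le> ivl_len I" "- ivl_len I \<le> x - y"
    using ivl_set_bounds[OF assms(1)] ivl_set_bounds[OF assms(2)]
    by (auto simp: ivl_len_eq intro: diff_mono)
qed

lemma ivl_len_le_cover_upto_negligible:
  assumes S: "summable_ivls S" and cover: "ivl_set I \<subseteq> ivls_union S"
  obtains \<eta> where "vanishes_upto s \<eta>" "ivl_len I \<le> ivls_total S + \<eta>"
proof -
  have summable: "lc_summable (ivls_len S)" and ivl: "\<forall>i. is_ivl (S i)"
    using S by (auto simp: summable_ivls_def)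
  obtain N where N: "\<forall>n\<ge>N. vanishes_upto s (ivls_len S n)"
    using lc_summable_terms_vanish[OF summable] by blast
  define P where "P n = (if N \<le> n then ivl_set (S n) else {})" for n
  have P: "\<forall>n. \<forall>x\<in>P n. \<forall>y\<in>P n. vanishes_upto s (x - y)"
    using N vanishes_upto_diff_ivl_set by (simp add: P_def ivls_len_def)
  obtain a b lc rc where I_eq: "I = (a, b, lc, rc)"
    by (cases I)
  have cover_ab: "{x. a < x \<and> x < b} \<subseteq> (\<Union>i\<in>{..<N}. ivl_set (S i)) \<union> (\<Union>n. P n)"
  proof
    fix x
    assume "x \<in> {x. a < x \<and> x < b}"
    then have "x \<in> ivls_union S"
      using cover by (auto simp: I_eq less_imp_le)
    then obtain n where "x \<in> ivl_set (S n)"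
      by (auto simp: ivls_union_def)
    then show "x \<in> (\<Union>i\<in>{..<N}. ivl_set (S i)) \<union> (\<Union>n. P n)"
      by (cases "N \<le> n") (auto simp: P_def)
  qed
  obtain \<eta> where \<eta>: "vanishes_upto s \<eta>" "ivl_len I \<le> sum (ivls_len S) {..<N} + \<eta>"
    using ivl_len_le_finite_cover[OF P ivl finite_lessThan cover_ab] I_eq by auto
  have "sum (ivls_len S) {..<N} \<le> ivls_total S"
    using lc_psum_le_suminf[OF ivls_len_nonneg[OF S] summable]
    by (simp add: ivls_total_def lc_psum_eq_sum)
  with \<eta> show ?thesis
    using that by (meson add_right_mono order_trans)
qed

lemma ivl_len_le_cover:
  assumes "summable_ivls S" "ivl_set I \<subseteq> ivls_union S"
  shows "ivl_len I \<le> ivls_total S"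
proof (rule ccontr)
  assume "\<not> ivl_len I \<le> ivls_total S"
  then have gap: "0 < ivl_len I - ivls_total S"
    by simp
  then obtain s where s: "\<not> vanishes_upto s (ivl_len I - ivls_total S)"
    using ex_not_vanishes_upto by (metis less_irrefl)
  obtain \<eta> where \<eta>: "vanishes_upto s \<eta>" "ivl_len I \<le> ivls_total S + \<eta>"
    using ivl_len_le_cover_upto_negligible[OF assms] .
  from \<eta>(2) have "ivl_len I - ivls_total S \<le> \<eta>"
    by (simp add: algebra_simps)
  moreover have "\<eta> < ivl_len I - ivls_total S"
    by (rule vanishes_upto_less[OF \<eta>(1) gap s])
  ultimately show False
    by simp
qed

definition fam_union :: "lc_fam \<Rightarrow> levi_civita set" where
  "fam_union F = (\<Union>n. fam_piece F n)"

definition fam_head :: "lc_fam \<Rightarrow> nat \<Rightarrow> lc_fam" where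
  "fam_head F K n = (if n < K then F n else None)"

definition fam_tail :: "lc_fam \<Rightarrow> nat \<Rightarrow> lc_fam" where
  "fam_tail F K n = (if K \<le> n then F n else None)"

lemma fam_piece_head: "fam_piece (fam_head F K) n = (if n < K then fam_piece F n else {})"
  by (simp add: fam_piece_def fam_head_def)

lemma fam_piece_tail: "fam_piece (fam_tail F K) n = (if K \<le> n then fam_piece F n else {})"
  by (simp add: fam_piece_def fam_tail_def)

lemma fam_len_head: "fam_len (fam_head F K) = (\<lambda>n. if n < K then fam_len F n else 0)"
  by (simp add: fun_eq_iff fam_len_def fam_head_def)

lemma fam_len_tail: "fam_len (fam_tail F K) = (\<lambda>n. fam_len F n - fam_len (fam_head F K) n)"
  by (simp add: fun_eq_iff fam_len_def fam_head_def fam_tail_def)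

lemma disj_fam_head: "disj_fam F \<Longrightarrow> disj_fam (fam_head F K)"
  unfolding disj_fam_def fam_piece_head by (auto simp: fam_head_def split: if_splits)

lemma disj_fam_tail: "disj_fam F \<Longrightarrow> disj_fam (fam_tail F K)"
  unfolding disj_fam_def fam_piece_tail by (auto simp: fam_tail_def split: if_splits)

lemma fam_union_head_Suc: "fam_union (fam_head F (Suc K)) = fam_union (fam_head F K) \<union> fam_piece F K"
  by (auto simp: fam_union_def fam_piece_head less_Suc_eq split: if_splits)

lemma fam_union_head_tail: "fam_union F = fam_union (fam_head F K) \<union> fam_union (fam_tail F K)"
  by (auto simp: fam_union_def fam_piece_head fam_piece_tail split: if_splits) (metis not_less)

lemma fam_union_head_mono: "fam_union (fam_head F K) \<subseteq> fam_union F"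
  using fam_union_head_tail by blast

lemma splits_covers_fam_piece: "splits_covers (fam_piece F n)"
  by (cases "F n") (simp_all add: fam_piece_def splits_covers_empty splits_covers_ivl_set)

lemma splits_covers_fam_union_head: "splits_covers (fam_union (fam_head F K))"
proof (induction K)
  case 0
  then show ?case
    by (simp add: fam_union_def fam_piece_head splits_covers_empty)
next
  case (Suc K)
  then show ?case
    unfolding fam_union_head_Suc by (intro splits_covers_Un splits_covers_fam_piece)
qed

lemma sums_fam_len_head: "lc_sums (fam_len (fam_head F K)) (sum (fam_len F) {..<K})"
proof -
  have "lc_psum (fam_len (fam_head F K)) n = sum (fam_len F) {..<K}" if "K \<le> n" for n
  proof -
    have "{..<n} \<inter> {i. i < K} = {..<K}"
      using that by auto
    then show ?thesis
      by (simp add: lc_psum_eq_sum fam_len_head sum.If_cases)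
  qed
  then show ?thesis
    unfolding lc_sums_def lc_tendsto_iff_vanishes by (auto intro!: exI[of _ K])
qed

lemma sums_fam_len_tail:
  "lc_summable (fam_len F) \<Longrightarrow>
    lc_sums (fam_len (fam_tail F K)) (lc_suminf (fam_len F) - sum (fam_len F) {..<K})"
  unfolding fam_len_tail by (intro lc_sums_diff lc_summable_sums sums_fam_len_head)

definition fam_cover :: "lc_fam \<Rightarrow> rat \<Rightarrow> nat \<Rightarrow> lc_ivl" where
  "fam_cover F Q n = (case F n of Some I \<Rightarrow> I | None \<Rightarrow> null_cover Q n)"

lemma disj_fam_is_ivl: "disj_fam F \<Longrightarrow> F n = Some I \<Longrightarrow> is_ivl I"
  unfolding disj_fam_def by blast

lemma fam_len_nonneg: "disj_fam F \<Longrightarrow> 0 \<le> fam_len F n"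
  by (cases "F n") (auto simp: fam_len_def disj_fam_is_ivl ivl_len_pos less_imp_le)

lemma fam_cover:
  assumes "disj_fam F" "lc_summable (fam_len F)"
  shows "summable_ivls (fam_cover F Q)"
    and "(\<Union>n. fam_piece F n) \<subseteq> ivls_union (fam_cover F Q)"
    and "ivls_total (fam_cover F Q) \<le> lc_suminf (fam_len F) + lc_suminf (filler Q)"
proof -
  have ivl: "is_ivl (fam_cover F Q n)" for n
    using disj_fam_is_ivl[OF assms(1)] summable_null_cover[of Q]
    by (cases "F n") (auto simp: fam_cover_def summable_ivls_def)
  have le: "ivls_len (fam_cover F Q) n \<le> fam_len F n + filler Q n" for n
    using fam_len_nonneg[OF assms(1), of n] filler_pos[of Q n]
    by (cases "F n") (auto simp: fam_cover_def ivls_len_def fam_len_def null_cover_def)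
  have ge: "0 \<le> ivls_len (fam_cover F Q) n" for n
    using ivl by (simp add: ivls_len_def ivl_len_pos less_imp_le)
  note sum = lc_suminf_add[OF assms(2) summable_filler]
  show "summable_ivls (fam_cover F Q)"
    using lc_summable_comparison(1)[OF ge le sum(1)] ivl by (simp add: summable_ivls_def)
  show "ivls_total (fam_cover F Q) \<le> lc_suminf (fam_len F) + lc_suminf (filler Q)"
    using lc_summable_comparison(2)[OF ge le sum(1)] sum(2) by (simp add: ivls_total_def)
  have "fam_piece F n \<subseteq> ivl_set (fam_cover F Q n)" for n
    by (cases "F n") (simp_all add: fam_piece_def fam_cover_def)
  then show "(\<Union>n. fam_piece F n) \<subseteq> ivls_union (fam_cover F Q)"
    unfolding ivls_union_def by blast
qed

lemma fam_cover_head: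
  assumes "disj_fam F"
  shows "summable_ivls (fam_cover (fam_head F K) Q)"
    and "fam_union (fam_head F K) \<subseteq> ivls_union (fam_cover (fam_head F K) Q)"
    and "ivls_total (fam_cover (fam_head F K) Q) \<le> sum (fam_len F) {..<K} + lc_suminf (filler Q)"
  using fam_cover[OF disj_fam_head[OF assms] lc_sums_summable[OF sums_fam_len_head]]
    lc_sums_unique[OF sums_fam_len_head] by (auto simp: fam_union_def)

lemma fam_cover_tail:
  assumes "disj_fam F" "lc_summable (fam_len F)"
  shows "summable_ivls (fam_cover (fam_tail F K) Q)"
    and "fam_union (fam_tail F K) \<subseteq> ivls_union (fam_cover (fam_tail F K) Q)"
    and "ivls_total (fam_cover (fam_tail F K) Q)
      \<le> (lc_suminf (fam_len F) - sum (fam_len F) {..<K}) + lc_suminf (filler Q)"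
  using fam_cover[OF disj_fam_tail[OF assms(1)] lc_sums_summable[OF sums_fam_len_tail[OF assms(2)]]]
    lc_sums_unique[OF sums_fam_len_tail[OF assms(2)]] by (auto simp: fam_union_def)

lemma fam_head_sum_le_cover:
  assumes F: "disj_fam F"
  shows "summable_ivls C \<Longrightarrow> fam_union (fam_head F K) \<subseteq> ivls_union C \<Longrightarrow>
    sum (fam_len F) {..<K} \<le> ivls_total C"
proof (induction K arbitrary: C)
  case 0
  then show ?case
    by (simp add: ivls_total_nonneg)
next
  case (Suc K)
  show ?case
  proof (rule lc_le_epsilon)
    fix e :: levi_civita
    assume "0 < e"
    obtain C1 C2 where C: "summable_ivls C1" "summable_ivls C2"
      "fam_piece F K \<inter> ivls_union C \<subseteq> ivls_union C1" "- fam_piece F K \<inter> ivls_union C \<subseteq> ivls_union C2"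
      "ivls_total C1 + ivls_total C2 \<le> ivls_total C + e"
      using splits_coversE[OF splits_covers_fam_piece Suc.prems(1) \<open>0 < e\<close>] by blast
    have "fam_piece F K \<subseteq> ivls_union C1"
      using Suc.prems(2) C(3) by (auto simp: fam_union_head_Suc)
    then have "fam_len F K \<le> ivls_total C1"
      using ivl_len_le_cover[OF C(1)] ivls_total_nonneg[OF C(1)]
      by (cases "F K") (auto simp: fam_piece_def fam_len_def)
    moreover have "fam_piece F n \<inter> fam_piece F K = {}" if "n < K" for n
      using F that unfolding disj_fam_def by simp
    then have "fam_union (fam_head F K) \<inter> fam_piece F K = {}"
      unfolding fam_union_def fam_piece_head by auto
    then have "fam_union (fam_head F K) \<subseteq> ivls_union C2"
      using Suc.prems(2) C(4) by (auto simp: fam_union_head_Suc)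
    then have "sum (fam_len F) {..<K} \<le> ivls_total C2"
      by (rule Suc.IH[OF C(2)])
    ultimately have "sum (fam_len F) {..<Suc K} \<le> ivls_total C1 + ivls_total C2"
      by (simp add: add_mono add.commute)
    then show "sum (fam_len F) {..<Suc K} \<le> ivls_total C + e"
      using C(5) by (rule order_trans)
  qed
qed

text \<open>The last clause says that \<open>G\<close> exceeds \<open>F\<close> by at most \<open>d\<close>, measured by covers.\<close>
definition squeezed_by_splitting :: "levi_civita set \<Rightarrow> levi_civita \<Rightarrow> bool" where
  "squeezed_by_splitting A d \<longleftrightarrow> (\<exists>F G T W. splits_covers F \<and> splits_covers G \<and>
     F \<subseteq> A \<and> A \<subseteq> G \<union> ivls_union T \<and> summable_ivls T \<and> ivls_total T \<le> d \<and>
     summable_ivls W \<and> G \<subseteq> ivls_union W \<and>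
     (\<forall>D. summable_ivls D \<longrightarrow> F \<subseteq> ivls_union D \<longrightarrow> ivls_total W \<le> ivls_total D + d))"

lemma split_cover_if_squeezed:
  assumes "squeezed_by_splitting A d" "summable_ivls S" "0 < d"
  obtains S1 S2 where "summable_ivls S1" "summable_ivls S2"
    "A \<inter> ivls_union S \<subseteq> ivls_union S1" "- A \<inter> ivls_union S \<subseteq> ivls_union S2"
    "ivls_total S1 + ivls_total S2 \<le> ivls_total S + (d + d + d + d + d)"
proof -
  obtain F G T W where F: "splits_covers F" "F \<subseteq> A" and G: "splits_covers G"
    and T: "A \<subseteq> G \<union> ivls_union T" "summable_ivls T" "ivls_total T \<le> d"
    and W: "summable_ivls W" "G \<subseteq> ivls_union W"
      "\<And>D. summable_ivls D \<Longrightarrow> F \<subseteq> ivls_union D \<Longrightarrow> ivls_total W \<le> ivls_total D + d"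
    using assms(1) unfolding squeezed_by_splitting_def by blast
  obtain C1 C2 where C: "summable_ivls C1" "summable_ivls C2"
      "G \<inter> ivls_union S \<subseteq> ivls_union C1" "- G \<inter> ivls_union S \<subseteq> ivls_union C2"
      "ivls_total C1 + ivls_total C2 \<le> ivls_total S + d"
    using splits_coversE[OF G assms(2,3)] by blast
  obtain D1 D2 where D: "summable_ivls D1" "summable_ivls D2"
      "F \<inter> ivls_union W \<subseteq> ivls_union D1" "- F \<inter> ivls_union W \<subseteq> ivls_union D2"
      "ivls_total D1 + ivls_total D2 \<le> ivls_total W + d"
    using splits_coversE[OF F(1) W(1) assms(3)] by blast
  note C1T = ivls_interleave[OF C(1) T(2)] and C2D2 = ivls_interleave[OF C(2) D(2)]
    and D1T = ivls_interleave[OF D(1) T(2)]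
  have "F \<subseteq> ivls_union (interleave D1 T)"
    using F(2) T(1) W(2) D(3) D1T(2) by blast
  then have "ivls_total W \<le> ivls_total D1 + ivls_total T + d"
    using W(3)[OF D1T(1)] D1T(3) by simp
  then have "ivls_total D1 + ivls_total D2 \<le> ivls_total D1 + ivls_total T + d + d"
    using D(5) by (meson add_right_mono order_trans)
  then have "ivls_total D2 \<le> ivls_total T + d + d"
    by (simp add: add.assoc)
  then have D2: "ivls_total D2 \<le> d + d + d"
    using T(3) by (meson add_right_mono order_trans)
  have "A \<inter> ivls_union S \<subseteq> ivls_union (interleave C1 T)"
    using T(1) C(3) C1T(2) by blast
  moreover have "- A \<inter> ivls_union S \<subseteq> ivls_union (interleave C2 D2)"
    using F(2) W(2) C(4) D(4) C2D2(2) by blast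
  moreover have "ivls_total (interleave C1 T) + ivls_total (interleave C2 D2)
      \<le> ivls_total S + (d + d + d + d + d)"
  proof -
    have "ivls_total (interleave C1 T) + ivls_total (interleave C2 D2)
        = (ivls_total C1 + ivls_total C2) + ivls_total T + ivls_total D2"
      using C1T(3) C2D2(3) by (simp add: algebra_simps)
    also have "\<dots> \<le> (ivls_total S + d) + d + (d + d + d)"
      by (rule add_mono[OF add_mono[OF C(5) T(3)] D2])
    finally show ?thesis
      by (simp add: algebra_simps)
  qed
  ultimately show ?thesis
    using that C1T(1) C2D2(1) by blast
qed

lemma splits_covers_if_squeezed:
  assumes "\<And>d. 0 < d \<Longrightarrow> squeezed_by_splitting A d"
  shows "splits_covers A"
  unfolding splits_covers_def
proof (intro allI impI)
  fix S :: "nat \<Rightarrow> lc_ivl" and e :: levi_civita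
  assume S: "summable_ivls S" and "0 < e"
  define d where "d = lc_half (lc_half (lc_half e))"
  have d: "0 < d"
    unfolding d_def using \<open>0 < e\<close> by (intro lc_half_pos)
  have "d + d + d + d + d \<le> (d + d + d + d + d) + (d + d + d)"
    using d by (simp add: add_increasing2)
  also have "\<dots> = e"
    by (rule lc_eqI) (simp add: d_def)
  finally have budget: "d + d + d + d + d \<le> e" .
  obtain S1 S2 where "summable_ivls S1" "summable_ivls S2"
      "A \<inter> ivls_union S \<subseteq> ivls_union S1" "- A \<inter> ivls_union S \<subseteq> ivls_union S2"
      "ivls_total S1 + ivls_total S2 \<le> ivls_total S + (d + d + d + d + d)"
    using split_cover_if_squeezed[OF assms[OF d] S d] by blast
  moreover from budget have "ivls_total S + (d + d + d + d + d) \<le> ivls_total S + e"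
    by simp
  ultimately show "\<exists>S1 S2. summable_ivls S1 \<and> summable_ivls S2 \<and> A \<inter> ivls_union S \<subseteq> ivls_union S1
      \<and> - A \<inter> ivls_union S \<subseteq> ivls_union S2 \<and> ivls_total S1 + ivls_total S2 \<le> ivls_total S + e"
    by (meson order_trans)
qed

section \<open>S-measurable sets\<close>

lemma inner_fam_sum_le_cover:
  assumes "inner_fam I A" "is_cover C A"
  shows "lc_suminf (fam_len I) \<le> ivls_total C"
proof -
  have I: "disj_fam I" "lc_summable (fam_len I)" "fam_union I \<subseteq> A"
    using assms(1) by (auto simp: inner_fam_def fam_union_def)
  have C: "summable_ivls C" "A \<subseteq> ivls_union C"
    using assms(2) by (auto simp: is_cover_iff)
  have "lc_psum (fam_len I) K \<le> ivls_total C" for K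
    using fam_head_sum_le_cover[OF I(1) C(1)] fam_union_head_mono I(3) C(2)
    by (metis lc_psum_eq_sum order_trans)
  then show ?thesis
    using lc_tendsto_upper_bound[of "lc_psum (fam_len I)" _ 0] lc_summable_sums[OF I(2)]
    unfolding lc_sums_def by blast
qed

lemma S_measurable_cover_near_inner:
  assumes "S_measurable A" "0 < e"
  obtains I C where "inner_fam I A" "is_cover C A" "ivls_total C \<le> lc_suminf (fam_len I) + e"
proof -
  obtain I J where IJ: "inner_fam I A" "outer_fam J A"
      "lc_suminf (fam_len J) - lc_suminf (fam_len I) \<le> lc_half e"
    using assms lc_half_pos unfolding S_measurable_def by blast
  obtain Q where Q: "lc_suminf (filler Q) < lc_half e"
    using ex_filler_sum_less lc_half_pos[OF assms(2)] by blast
  have J: "disj_fam J" "lc_summable (fam_len J)" "A \<subseteq> fam_union J"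
    using IJ(2) by (auto simp: outer_fam_def fam_union_def)
  note C = fam_cover[OF J(1,2), of Q]
  have "is_cover (fam_cover J Q) A"
    using C(1,2) J(3) by (auto simp: is_cover_iff fam_union_def)
  moreover have "ivls_total (fam_cover J Q) \<le> lc_suminf (fam_len I) + e"
  proof -
    have "ivls_total (fam_cover J Q) \<le> lc_suminf (fam_len J) + lc_suminf (filler Q)"
      by (rule C(3))
    also have "\<dots> \<le> (lc_suminf (fam_len I) + lc_half e) + lc_half e"
      using IJ(3) Q by (intro add_mono) (simp_all add: algebra_simps)
    finally show ?thesis
      by (simp add: add.assoc lc_half_half)
  qed
  ultimately show ?thesis
    using that IJ(1) by blast
qed

lemma S_measurable_outer_measurable:
  assumes "S_measurable A"
  shows "outer_measurable A"
  unfolding outer_measurable_def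
proof (rule ex_is_inf_if_narrow)
  fix e :: levi_civita
  assume "0 < e"
  then obtain I C where IC: "inner_fam I A" "is_cover C A" "ivls_total C \<le> lc_suminf (fam_len I) + e"
    using S_measurable_cover_near_inner[OF assms] by blast
  have "\<forall>y\<in>cover_sums A. lc_suminf (fam_len I) \<le> y"
    using inner_fam_sum_le_cover[OF IC(1)] by (auto simp: cover_sums_iff)
  moreover have "ivls_total C \<in> cover_sums A"
    using IC(2) cover_sums_iff by blast
  moreover have "ivls_total C - lc_suminf (fam_len I) \<le> e"
    using IC(3) by (simp add: algebra_simps)
  ultimately show "\<exists>x\<in>cover_sums A. \<exists>l. (\<forall>y\<in>cover_sums A. l \<le> y) \<and> x - l \<le> e"
    by blast
qed

lemma S_measurable_Mu_eq_Ms: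
  assumes "S_measurable A"
  shows "Mu A = Ms A"
proof -
  note om = S_measurable_outer_measurable[OF assms]
  have "is_sup {lc_suminf (fam_len I) | I. inner_fam I A} (Mu A)"
    unfolding is_sup_def
  proof (intro conjI ballI allI impI)
    fix t
    assume "t \<in> {lc_suminf (fam_len I) | I. inner_fam I A}"
    then show "t \<le> Mu A"
      using Mu_greatest[OF om] inner_fam_sum_le_cover by blast
  next
    fix m'
    assume upper: "\<forall>t\<in>{lc_suminf (fam_len I) | I. inner_fam I A}. t \<le> m'"
    show "Mu A \<le> m'"
    proof (rule lc_le_epsilon)
      fix e :: levi_civita
      assume "0 < e"
      then obtain I C where IC: "inner_fam I A" "is_cover C A" "ivls_total C \<le> lc_suminf (fam_len I) + e"
        using S_measurable_cover_near_inner[OF assms] by blast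
      have "Mu A \<le> ivls_total C"
        using Mu_le_cover[OF om IC(2)] .
      also have "\<dots> \<le> m' + e"
        using IC(1,3) upper by (metis (mono_tags, lifting) add_right_mono mem_Collect_eq order_trans)
      finally show "Mu A \<le> m' + e" .
    qed
  qed
  then show ?thesis
    unfolding Ms_def using is_sup_unique by (metis (mono_tags, lifting) theI)
qed

lemma S_measurable_heads:
  assumes "S_measurable A" "0 < q"
  obtains I J K where "inner_fam I A" "outer_fam J A"
    "sum (fam_len J) {..<K} \<le> sum (fam_len I) {..<K} + q + q"
    "lc_suminf (fam_len J) - sum (fam_len J) {..<K} \<le> q"
proof -
  obtain I J where IJ: "inner_fam I A" "outer_fam J A"
      "lc_suminf (fam_len J) - lc_suminf (fam_len I) \<le> q"
    using assms unfolding S_measurable_def by blast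
  have I: "lc_summable (fam_len I)" and J: "disj_fam J" "lc_summable (fam_len J)"
    using IJ(1,2) by (auto simp: inner_fam_def outer_fam_def)
  obtain K1 where K1: "\<forall>K\<ge>K1. lc_suminf (fam_len I) - sum (fam_len I) {..<K} < q"
    using lc_suminf_tail_less[OF I assms(2)] by blast
  obtain K2 where K2: "\<forall>K\<ge>K2. lc_suminf (fam_len J) - sum (fam_len J) {..<K} < q"
    using lc_suminf_tail_less[OF J(2) assms(2)] by blast
  define K where "K = max K1 K2"
  have "sum (fam_len J) {..<K} \<le> lc_suminf (fam_len J)"
    using lc_psum_le_suminf[OF fam_len_nonneg[OF J(1)] J(2)] by (simp add: lc_psum_eq_sum)
  also have "\<dots> \<le> lc_suminf (fam_len I) + q"
    using IJ(3) by (simp add: algebra_simps)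
  also have "\<dots> \<le> sum (fam_len I) {..<K} + q + q"
    using K1 by (simp add: K_def algebra_simps less_imp_le)
  finally show ?thesis
    using that IJ(1,2) K2 by (simp add: K_def less_imp_le)
qed

lemma S_measurable_squeezed:
  assumes "S_measurable A" "0 < d"
  shows "squeezed_by_splitting A d"
proof -
  define q where "q = lc_half (lc_half d)"
  have q: "0 < q"
    unfolding q_def using assms(2) by (intro lc_half_pos)
  have "q + q \<le> q + q + q" "q + q + q \<le> q + q + q + q"
    using q by simp_all
  moreover have "q + q + q + q = d"
    by (rule lc_eqI) (simp add: q_def)
  ultimately have qq: "q + q \<le> d" and qqq: "q + q + q \<le> d"
    by (metis order_trans)+
  obtain I J K where IJ: "inner_fam I A" "outer_fam J A"
      "sum (fam_len J) {..<K} \<le> sum (fam_len I) {..<K} + q + q"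
      "lc_suminf (fam_len J) - sum (fam_len J) {..<K} \<le> q"
    using S_measurable_heads[OF assms(1) q] by blast
  have I: "disj_fam I" "fam_union I \<subseteq> A"
    using IJ(1) by (auto simp: inner_fam_def fam_union_def)
  have J: "disj_fam J" "lc_summable (fam_len J)" "A \<subseteq> fam_union J"
    using IJ(2) by (auto simp: outer_fam_def fam_union_def)
  obtain Q where Q: "lc_suminf (filler Q) \<le> q"
    using ex_filler_sum_less[OF q] less_imp_le by metis
  define T where "T = fam_cover (fam_tail J K) Q"
  define W where "W = fam_cover (fam_head J K) Q"
  note T_props = fam_cover_tail[OF J(1,2), of K Q, folded T_def]
  note W_props = fam_cover_head[OF J(1), of K Q, folded W_def]
  have "A \<subseteq> fam_union (fam_head J K) \<union> ivls_union T"
    using J(3) fam_union_head_tail[of J K] T_props(2) by blast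
  moreover have "ivls_total T \<le> d"
    using T_props(3) add_mono[OF IJ(4) Q] qq by (meson order_trans)
  moreover have "ivls_total W \<le> ivls_total D + d"
    if "summable_ivls D" "fam_union (fam_head I K) \<subseteq> ivls_union D" for D
  proof -
    have "ivls_total W \<le> sum (fam_len I) {..<K} + q + q + q"
      using W_props(3) add_mono[OF IJ(3) Q] by (meson order_trans)
    also have "\<dots> \<le> ivls_total D + (q + q + q)"
      using fam_head_sum_le_cover[OF I(1) that] by (simp add: add.assoc)
    finally show ?thesis
      using qqq by (meson add_left_mono order_trans)
  qed
  ultimately show ?thesis
    unfolding squeezed_by_splitting_def
    using splits_covers_fam_union_head[of I K] splits_covers_fam_union_head[of J K]
      fam_union_head_mono[of I K] I(2) T_props(1) W_props(1,2) by blast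
qed

theorem mainTheorem16:
  fixes A :: "levi_civita set"
  assumes "S_measurable A"
  shows "L_measurable A \<and> L_measure A = Ms A"
proof -
  have "splits_covers A"
    using assms by (intro splits_covers_if_squeezed S_measurable_squeezed)
  then show ?thesis
    using S_measurable_outer_measurable[OF assms] S_measurable_Mu_eq_Ms[OF assms]
      caratheodory_if_splits_covers
    unfolding L_measurable_def L_measure_def by blast
qed

end
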